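(* Let $(H_X,H_Z)$ be a CSS code and let $\mathcal{C}'$ be a non-interleaved single-ancilla CNOT-based SEC for it with residual error set $\mathcal{E}$ and circuit distance $d'_{\mathrm{circ}}$. Then $d'_{\mathrm{circ}}\le d_{\mathrm{ext}}(\mathcal{R})$ for every $\mathcal{R}\subseteq\mathcal{E}$, and $d'_{\mathrm{circ}}=d_{\mathrm{ext}}(\mathcal{E})$.
   Context: A CSS code on $n$ data qubits is given by binary $H_X\in\mathbb{F}_2^{m\times n}$, $H_Z\in\mathbb{F}_2^{m'\times n}$ with $H_XH_Z^{\mathsf T}=0$; rows are $X$-type (resp. $Z$-type) checks. $L_X$ is a matrix whose rows are $X$-type logical operators spanning $\ker(H_Z)$ modulo $\operatorname{span}(H_X)$; $L_Z$ analogously with $X\leftrightarrow Z$. Single-ancilla CNOT-based SEC: each check has its own dedicated ancilla. For an $X$ check the ancilla is prepared in $|+\rangle$, CNOTs go from ancilla to each data qubit in its support, and it is measured in $X$; for a $Z$ check the ancilla is prepared in $|0\rangle$, CNOTs go from each data qubit in its support to the ancilla, and it is measured in $Z$. Operations take one time step, each qubit in at most one operation per step; repeated for several rounds. It is non-interleaved if either all $X$-type-check CNOTs precede all overlapping $Z$-type-check CNOTs (acting on common data qubits), or all $Z$-type-check CNOTs precede all overlapping $X$-type-check CNOTs. Noise and circuit distance: each operation fails independently; failed idles are followed by a Pauli $X$, $Y$ or $Z$; failed CNOTs by a non-identity two-qubit Pauli; failed preparations prepare the orthogonal state; failed measurements flip their outcome; each such event is an error mechanism. In an $X$-basis (resp.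 $Z$-basis) memory experiment (data prepared in the $|+\rangle$ (resp. $|0\rangle$) product state, several noisy rounds, then all data measured in that basis, giving a perfect final round), detectors are parities of outcomes deterministic without noise. $d^X_{\mathrm{circ}}$ (resp. $d^Z_{\mathrm{circ}}$) is the minimum number of error mechanisms flipping no detector but flipping a logical observable; the circuit distance is the minimum of the two. Residual errors: for a $Z$-check with support $i_1,\dots,i_w$ listed in CNOT order, residual errors are $E_l=\sum_{s=l}^w e_{i_s}$, $l=2,\dots,w$ ($Z$-type); $\mathcal{E}_Z$ is the disjoint union over $Z$ checks; $\mathcal{E}_X$ analogously from $X$ checks; $\mathcal{E}=\mathcal{E}_X\sqcup\mathcal{E}_Z$; subsets are $\mathcal{R}=\mathcal{R}_X\sqcup\mathcal{R}_Z$ with $\mathcal{R}_X\subseteq\mathcal{E}_X$, $\mathcal{R}_Z\subseteq\mathcal{E}_Z$. Extended code distance: for $\mathcal{R}_Z$, form $H_X^{\mathrm{ext}}$, $L_X^{\mathrm{ext}}$ by appending to $H_X$ and $L_X$, for each residual error in $\mathcal{R}_Z$, one column equal to the mod-2 sum of the columns indexed by its qubits; $d^Z_{\mathrm{ext}}(\mathcal{R}_Z)$ is the minimum Hamming weight of $x$ with $H_X^{\mathrm{ext}}x^{\mathsf T}=0$, $L_X^{\mathrm{ext}}x^{\mathsf T}\neq0$. $d^X_{\mathrm{ext}}$ analogously with $X\leftrightarrow Z$; $d_{\mathrm{ext}}(\mathcal{R})=\min(d^X_{\mathrm{ext}}(\mathcal{R}_X),d^Z_{\mathrm{ext}}(\mathcal{R}_Z))$.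 *)

theory Defs
  imports Main "HOL-Library.Extended_Nat"
begin

text \<open>Binary matrices are functions nat => nat => bool (row, column); only
  entries with row index below the row count and column index below nq matter.\<close>

record css =
  nq :: nat
  mx :: nat   hx :: "nat \<Rightarrow> nat \<Rightarrow> bool"   \<comment> \<open>H_X, mx x n\<close>
  mz :: nat   hz :: "nat \<Rightarrow> nat \<Rightarrow> bool"   \<comment> \<open>H_Z, mz x n\<close>
  kx :: nat   lx :: "nat \<Rightarrow> nat \<Rightarrow> bool"   \<comment> \<open>L_X, kx x n\<close>
  kz :: nat   lz :: "nat \<Rightarrow> nat \<Rightarrow> bool"   \<comment> \<open>L_Z, kz x n\<close>

definition css_code :: "css \<Rightarrow> bool" where
  "css_code C \<longleftrightarrow> (\<forall>i<mx C. \<forall>k<mz C. even (card {q. q < nq C \<and> hx C i q \<and> hz C k q}))"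

definition in_ker :: "(nat \<Rightarrow> nat \<Rightarrow> bool) \<Rightarrow> nat \<Rightarrow> nat \<Rightarrow> (nat \<Rightarrow> bool) \<Rightarrow> bool" where
  "in_ker H m n v \<longleftrightarrow> (\<forall>i<m. even (card {q. q < n \<and> H i q \<and> v q}))"

definition rowcomb :: "(nat \<Rightarrow> nat \<Rightarrow> bool) \<Rightarrow> nat set \<Rightarrow> nat \<Rightarrow> bool" where
  "rowcomb M S q \<longleftrightarrow> odd (card {i \<in> S. M i q})"

text \<open>Rows of L lie in ker(H') and span ker(H') modulo the row span of H.\<close>
definition logical_rows ::
  "nat \<Rightarrow> (nat \<Rightarrow> nat \<Rightarrow> bool) \<Rightarrow> nat \<Rightarrow> (nat \<Rightarrow> nat \<Rightarrow> bool) \<Rightarrow> nat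
     \<Rightarrow> (nat \<Rightarrow> nat \<Rightarrow> bool) \<Rightarrow> nat \<Rightarrow> bool" where
  "logical_rows n H m H' m' L k \<longleftrightarrow>
     (\<forall>l<k. in_ker H' m' n (L l)) \<and>
     (\<forall>v. in_ker H' m' n v \<longrightarrow>
        (\<exists>S \<subseteq> {..<k}. \<exists>T \<subseteq> {..<m}. \<forall>q<n. v q = (rowcomb L S q \<noteq> rowcomb H T q)))"

definition css_with_logicals :: "css \<Rightarrow> bool" where
  "css_with_logicals C \<longleftrightarrow> css_code C \<and>
     logical_rows (nq C) (hx C) (mx C) (hz C) (mz C) (lx C) (kx C) \<and>
     logical_rows (nq C) (hz C) (mz C) (hx C) (mx C) (lz C) (kz C)"

datatype chk = XC nat | ZC nat

fun isX :: "chk \<Rightarrow> bool" where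
  "isX (XC _) = True" | "isX (ZC _) = False"

definition checks :: "css \<Rightarrow> chk set" where
  "checks C = XC ` {..<mx C} \<union> ZC ` {..<mz C}"

fun supp :: "css \<Rightarrow> chk \<Rightarrow> nat set" where
  "supp C (XC i) = {q. q < nq C \<and> hx C i q}"
| "supp C (ZC k) = {q. q < nq C \<and> hz C k q}"

datatype qubit = Data nat | Anc chk

datatype meas = MAnc nat chk  \<comment> \<open>ancilla outcome of check c in round r\<close>
              | MData nat

text \<open>A single-ancilla SEC round of length per: each check c has its ancilla prepared at
  time prepT c, the CNOT with data qubit q at time cnT c q, and is measured at measT c.\<close>
record sched =
  per :: nat
  prepT :: "chk \<Rightarrow> nat"
  measT :: "chk \<Rightarrow> nat"
  cnT :: "chk \<Rightarrow> nat \<Rightarrow> nat"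

definition valid_sec :: "css \<Rightarrow> sched \<Rightarrow> bool" where
  "valid_sec C S \<longleftrightarrow>
     (\<forall>c \<in> checks C. prepT S c < measT S c \<and> measT S c < per S \<and>
        (\<forall>q \<in> supp C c. prepT S c < cnT S c q \<and> cnT S c q < measT S c) \<and>
        inj_on (cnT S c) (supp C c)) \<and>
     (\<forall>q c1 c2. c1 \<in> checks C \<longrightarrow> c2 \<in> checks C \<longrightarrow> c1 \<noteq> c2 \<longrightarrow>
        q \<in> supp C c1 \<longrightarrow> q \<in> supp C c2 \<longrightarrow> cnT S c1 q \<noteq> cnT S c2 q)"

definition non_interleaved :: "css \<Rightarrow> sched \<Rightarrow> bool" where
  "non_interleaved C S \<longleftrightarrow>
     (\<forall>i<mx C. \<forall>k<mz C. \<forall>q \<in> supp C (XC i) \<inter> supp C (ZC k).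
         cnT S (XC i) q < cnT S (ZC k) q) \<or>
     (\<forall>i<mx C. \<forall>k<mz C. \<forall>q \<in> supp C (XC i) \<inter> supp C (ZC k).
         cnT S (ZC k) q < cnT S (XC i) q)"

datatype op = PrepZ qubit | PrepX qubit | MeasZ qubit meas | MeasX qubit meas
            | CNOT qubit qubit  \<comment> \<open>control, target\<close>
            | Idle qubit

type_synonym layer = "op set"
type_synonym frame = "(qubit \<Rightarrow> bool) \<times> (qubit \<Rightarrow> bool)"  \<comment> \<open>X part, Z part\<close>

definition reset :: "layer \<Rightarrow> qubit \<Rightarrow> bool" where
  "reset L u \<longleftrightarrow> PrepZ u \<in> L \<or> PrepX u \<in> L"

text \<open>Conjugation of a Pauli frame through one layer (operations of a layer act on
  disjoint qubits).\<close>
definition layer_apply :: "layer \<Rightarrow> frame \<Rightarrow> frame" where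
  "layer_apply L F =
     ((\<lambda>u. \<not> reset L u \<and> (fst F u \<noteq> odd (card {a. CNOT a u \<in> L \<and> fst F a}))),
      (\<lambda>u. \<not> reset L u \<and> (snd F u \<noteq> odd (card {b. CNOT u b \<in> L \<and> snd F b}))))"

text \<open>Which measurement outcomes of the layer are flipped by a frame present before it.\<close>
definition layer_flips :: "layer \<Rightarrow> frame \<Rightarrow> meas \<Rightarrow> bool" where
  "layer_flips L F m \<longleftrightarrow>
     odd (card {u. MeasZ u m \<in> L \<and> fst F u} + card {u. MeasX u m \<in> L \<and> snd F u})"

fun propagate :: "(nat \<Rightarrow> layer) \<Rightarrow> nat \<Rightarrow> nat \<Rightarrow> frame \<Rightarrow> meas \<Rightarrow> bool" where
  "propagate Ls g 0 F = (\<lambda>m. False)"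
| "propagate Ls g (Suc k) F =
     (\<lambda>m. layer_flips (Ls g) F m \<noteq> propagate Ls (Suc g) k (layer_apply (Ls g) F) m)"

datatype fkind = PauliF "qubit set" "qubit set"  \<comment> \<open>X support, Z support\<close>
               | FlipF

type_synonym mech = "nat \<times> op \<times> fkind"   \<comment> \<open>layer, failing operation, fault\<close>

fun fault_ok :: "op \<Rightarrow> fkind \<Rightarrow> bool" where
  "fault_ok (Idle u) e = (\<exists>X Z. e = PauliF X Z \<and> X \<subseteq> {u} \<and> Z \<subseteq> {u} \<and> X \<union> Z \<noteq> {})"
| "fault_ok (CNOT a b) e = (\<exists>X Z. e = PauliF X Z \<and> X \<subseteq> {a, b} \<and> Z \<subseteq> {a, b} \<and> X \<union> Z \<noteq> {})"
| "fault_ok (PrepZ u) e = (e = PauliF {u} {})"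
| "fault_ok (PrepX u) e = (e = PauliF {} {u})"
| "fault_ok (MeasZ u m) e = (e = FlipF)"
| "fault_ok (MeasX u m) e = (e = FlipF)"

definition mechs :: "(nat \<Rightarrow> layer) \<Rightarrow> nat \<Rightarrow> mech set" where
  "mechs Ls N = {(g, p, e). g < N \<and> p \<in> Ls g \<and> fault_ok p e}"

fun meas_label :: "op \<Rightarrow> meas option" where
  "meas_label (MeasZ u m) = Some m"
| "meas_label (MeasX u m) = Some m"
| "meas_label _ = None"

fun mech_effect :: "(nat \<Rightarrow> layer) \<Rightarrow> nat \<Rightarrow> mech \<Rightarrow> meas \<Rightarrow> bool" where
  "mech_effect Ls N (g, p, PauliF X Z) =
     propagate Ls (Suc g) (N - Suc g) ((\<lambda>u. u \<in> X), (\<lambda>u. u \<in> Z))"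
| "mech_effect Ls N (g, p, FlipF) = (\<lambda>m. meas_label p = Some m)"

definition total_flips :: "(nat \<Rightarrow> layer) \<Rightarrow> nat \<Rightarrow> mech set \<Rightarrow> meas \<Rightarrow> bool" where
  "total_flips Ls N F m \<longleftrightarrow> odd (card {f \<in> F. mech_effect Ls N f m})"

text \<open>Each operation fails at
  most once, hence mechanisms in a fault set have distinct locations.\<close>
definition circuit_distance ::
  "(nat \<Rightarrow> layer) \<Rightarrow> nat \<Rightarrow> meas set set \<Rightarrow> meas set set \<Rightarrow> enat" where
  "circuit_distance Ls N Ds Obs =
     Inf ((\<lambda>F. enat (card F)) `
       {F. finite F \<and> F \<subseteq> mechs Ls N \<and> inj_on (\<lambda>(g, p, e). (g, p)) F \<and>
           (\<forall>D \<in> Ds. even (card {m \<in> D. total_flips Ls N F m})) \<and>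
           (\<exists>Ob \<in> Obs. odd (card {m \<in> Ob. total_flips Ls N F m}))})"

datatype basis = BX | BZ

definition round_layer :: "css \<Rightarrow> sched \<Rightarrow> nat \<Rightarrow> nat \<Rightarrow> layer" where
  "round_layer C S r t =
     {PrepX (Anc c) | c. c \<in> checks C \<and> isX c \<and> prepT S c = t} \<union>
     {PrepZ (Anc c) | c. c \<in> checks C \<and> \<not> isX c \<and> prepT S c = t} \<union>
     {MeasX (Anc c) (MAnc r c) | c. c \<in> checks C \<and> isX c \<and> measT S c = t} \<union>
     {MeasZ (Anc c) (MAnc r c) | c. c \<in> checks C \<and> \<not> isX c \<and> measT S c = t} \<union>
     {CNOT (Anc c) (Data q) | c q. c \<in> checks C \<and> isX c \<and> q \<in> supp C c \<and> cnT S c q = t} \<union>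
     {CNOT (Data q) (Anc c) | c q. c \<in> checks C \<and> \<not> isX c \<and> q \<in> supp C c \<and> cnT S c q = t} \<union>
     {Idle (Anc c) | c. c \<in> checks C \<and> t \<noteq> prepT S c \<and> t \<noteq> measT S c \<and>
                          t \<notin> cnT S c ` supp C c} \<union>
     {Idle (Data q) | q. q < nq C \<and> (\<forall>c \<in> checks C. q \<in> supp C c \<longrightarrow> cnT S c q \<noteq> t)}"

definition anc_idle :: "css \<Rightarrow> layer" where
  "anc_idle C = {Idle (Anc c) | c. c \<in> checks C}"

text \<open>Memory experiment in basis b with R noisy rounds: layer 0 prepares all data qubits,
  layers 1 .. R*per are the rounds, layer R*per+1 measures all data qubits.\<close>
definition mem_layer :: "css \<Rightarrow> sched \<Rightarrow> basis \<Rightarrow> nat \<Rightarrow> nat \<Rightarrow> layer" where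
  "mem_layer C S b R g =
     (if g = 0 then
        {(if b = BX then PrepX (Data q) else PrepZ (Data q)) | q. q < nq C} \<union> anc_idle C
      else if g = Suc (R * per S) then
        {(if b = BX then MeasX (Data q) (MData q) else MeasZ (Data q) (MData q)) | q. q < nq C}
          \<union> anc_idle C
      else if g \<le> R * per S then round_layer C S ((g - 1) div per S) ((g - 1) mod per S)
      else {})"

definition mem_len :: "sched \<Rightarrow> nat \<Rightarrow> nat" where
  "mem_len S R = R * per S + 2"

fun own :: "basis \<Rightarrow> nat \<Rightarrow> chk" where
  "own BX i = XC i" | "own BZ i = ZC i"

fun nown :: "css \<Rightarrow> basis \<Rightarrow> nat" where
  "nown C BX = mx C" | "nown C BZ = mz C"

definition detectors :: "css \<Rightarrow> basis \<Rightarrow> nat \<Rightarrow> meas set set" where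
  "detectors C b R =
     {{MAnc 0 (own b i)} | i. i < nown C b} \<union>
     {{MAnc (r - 1) c, MAnc r c} | r c. 1 \<le> r \<and> r < R \<and> c \<in> checks C} \<union>
     {insert (MAnc (R - 1) (own b i)) (MData ` supp C (own b i)) | i. i < nown C b}"

fun observables :: "css \<Rightarrow> basis \<Rightarrow> meas set set" where
  "observables C BX = {MData ` {q. q < nq C \<and> lx C l q} | l. l < kx C}"
| "observables C BZ = {MData ` {q. q < nq C \<and> lz C l q} | l. l < kz C}"

definition circ_dist_basis :: "css \<Rightarrow> sched \<Rightarrow> nat \<Rightarrow> basis \<Rightarrow> enat" where
  "circ_dist_basis C S R b =
     circuit_distance (mem_layer C S b R) (mem_len S R) (detectors C b R) (observables C b)"

definition circ_dist :: "css \<Rightarrow> sched \<Rightarrow> nat \<Rightarrow> enat" where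
  "circ_dist C S R = min (circ_dist_basis C S R BX) (circ_dist_basis C S R BZ)"

text \<open>Residual error E_l of check c is indexed by (c, q) with q = i_l (l \<ge> 2, i.e. q not
  the first qubit of c in CNOT order); its support is {i_s. s \<ge> l}.\<close>
definition resid_idx :: "css \<Rightarrow> sched \<Rightarrow> bool \<Rightarrow> (chk \<times> nat) set" where
  "resid_idx C S xtype =
     {(c, q). c \<in> checks C \<and> isX c = xtype \<and> q \<in> supp C c \<and>
              (\<exists>q' \<in> supp C c. cnT S c q' < cnT S c q)}"

definition resid_set :: "css \<Rightarrow> sched \<Rightarrow> chk \<times> nat \<Rightarrow> nat set" where
  "resid_set C S r = {q' \<in> supp C (fst r). cnT S (fst r) (snd r) \<le> cnT S (fst r) q'}"

fun ext_col :: "(nat \<Rightarrow> nat \<Rightarrow> bool) \<Rightarrow> ('r \<Rightarrow> nat set) \<Rightarrow> nat \<Rightarrow> nat + 'r \<Rightarrow> bool" where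
  "ext_col H E i (Inl q) = H i q"
| "ext_col H E i (Inr r) = odd (card {q \<in> E r. H i q})"

text \<open>x is identified with its support, a set of columns of the extended matrices.\<close>
definition ext_dist ::
  "nat \<Rightarrow> (nat \<Rightarrow> nat \<Rightarrow> bool) \<Rightarrow> nat \<Rightarrow> (nat \<Rightarrow> nat \<Rightarrow> bool) \<Rightarrow> nat
     \<Rightarrow> ('r \<Rightarrow> nat set) \<Rightarrow> 'r set \<Rightarrow> enat" where
  "ext_dist n H m L k E R =
     Inf ((\<lambda>X. enat (card X)) `
       {X. finite X \<and> X \<subseteq> Inl ` {..<n} \<union> Inr ` R \<and>
           (\<forall>i<m. even (card {c \<in> X. ext_col H E i c})) \<and>
           (\<exists>l<k. odd (card {c \<in> X. ext_col L E l c}))})"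

definition ext_dist_Z :: "css \<Rightarrow> sched \<Rightarrow> (chk \<times> nat) set \<Rightarrow> enat" where
  "ext_dist_Z C S RZ = ext_dist (nq C) (hx C) (mx C) (lx C) (kx C) (resid_set C S) RZ"

definition ext_dist_X :: "css \<Rightarrow> sched \<Rightarrow> (chk \<times> nat) set \<Rightarrow> enat" where
  "ext_dist_X C S RX = ext_dist (nq C) (hz C) (mz C) (lz C) (kz C) (resid_set C S) RX"

definition d_ext :: "css \<Rightarrow> sched \<Rightarrow> (chk \<times> nat) set \<Rightarrow> (chk \<times> nat) set \<Rightarrow> enat" where
  "d_ext C S RX RZ = min (ext_dist_X C S RX) (ext_dist_Z C S RZ)"

end

theory Submission
  imports Defs
begin

text \<open>By exchanging \<open>X\<close> and \<open>Z\<close> it suffices to treat the \<open>X\<close>-basis memory experiment, in which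
  only \<open>Z\<close> errors matter. Propagating a single fault through the circuit, its effect on the final
  data measurements is at most one data qubit or a suffix, in CNOT order, of the support of a
  \<open>Z\<close> check: nothing, a whole stabiliser, or a residual error. Since the detectors compare
  consecutive rounds and the final data, the data errors of an undetected fault set have trivial
  \<open>X\<close> syndrome, so the columns of the extended matrices hit an odd number of times form an
  extended codeword; hence \<open>d_ext \<le> d_circ\<close>. Conversely every column is realised by one fault
  in the last round, a \<open>Z\<close> on a data qubit (or a flipped final measurement) or a \<open>Z \<otimes> Z\<close> hook
  error on a CNOT of a \<open>Z\<close> check. Non-interleaving makes the last-round \<open>X\<close> checks see either
  none or all of these residual errors, and in both cases the faults of an extended codeword
  trigger no detector. More residual columns can only lower the extended distance, which gives
  the inequality for every subset of residual errors.\<close>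


section \<open>Parity of finite sets\<close>

definition parity :: "'a set \<Rightarrow> bool" where
  "parity A \<longleftrightarrow> odd (card A)"

lemma parity_empty [simp]: "\<not> parity {}"
  by (simp add: parity_def)

lemma parity_imp_nonempty: "parity A \<Longrightarrow> A \<noteq> {}"
  by auto

lemma parity_insert: "finite A \<Longrightarrow> x \<notin> A \<Longrightarrow> parity (insert x A) = (\<not> parity A)"
  by (simp add: parity_def)

lemma parity_Un:
  "finite A \<Longrightarrow> finite B \<Longrightarrow> A \<inter> B = {} \<Longrightarrow> parity (A \<union> B) = (parity A \<noteq> parity B)"
  by (simp add: parity_def card_Un_disjoint)

lemma parity_image: "inj_on f A \<Longrightarrow> parity (f ` A) = parity A"
  by (simp add: parity_def card_image)

lemma parity_filter_xor:
  "finite A \<Longrightarrow> parity {x\<in>A. P x \<noteq> Q x} = (parity {x\<in>A. P x} \<noteq> parity {x\<in>A. Q x})"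
proof (induction A rule: finite_induct)
  case empty
  then show ?case by simp
next
  case (insert a A)
  have split: "{x \<in> insert a A. T x} = (if T a then insert a {x\<in>A. T x} else {x\<in>A. T x})" for T
    by auto
  show ?case
    using insert by (subst (1 2 3) split) (auto simp: parity_insert)
qed

lemma parity_Sigma:
  "finite A \<Longrightarrow> \<forall>x\<in>A. finite (B x) \<Longrightarrow> parity (SIGMA x:A. B x) = parity {x\<in>A. parity (B x)}"
proof (induction A rule: finite_induct)
  case empty
  then show ?case by simp
next
  case (insert a A)
  have split: "(SIGMA x:insert a A. B x) = ({a} \<times> B a) \<union> (SIGMA x:A. B x)"
    and disj: "({a} \<times> B a) \<inter> (SIGMA x:A. B x) = {}"
    using insert by auto
  have "parity ({a} \<times> B a) = parity (B a)"
    by (simp add: parity_def card_cartesian_product)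
  then have "parity (SIGMA x:insert a A. B x) = (parity (B a) \<noteq> parity (SIGMA x:A. B x))"
    using insert by (simp add: split disj parity_Un finite_SigmaI)
  moreover have "{x \<in> insert a A. parity (B x)} =
      (if parity (B a) then insert a {x\<in>A. parity (B x)} else {x\<in>A. parity (B x)})"
    by auto
  ultimately show ?case
    using insert by (simp add: parity_insert)
qed

lemma parity_swap:
  assumes "finite A" "finite B"
  shows "parity {a\<in>A. parity {b\<in>B. Q a b}} = parity {b\<in>B. parity {a\<in>A. Q a b}}"
proof -
  have "parity {a\<in>A. parity {b\<in>B. Q a b}} = parity (SIGMA a:A. {b\<in>B. Q a b})"
    using assms by (simp add: parity_Sigma)
  also have "(SIGMA a:A. {b\<in>B. Q a b}) = prod.swap ` (SIGMA b:B. {a\<in>A. Q a b})"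
    by auto
  also have "parity \<dots> = parity (SIGMA b:B. {a\<in>A. Q a b})"
    by (simp add: parity_image)
  also have "\<dots> = parity {b\<in>B. parity {a\<in>A. Q a b}}"
    using assms by (simp add: parity_Sigma)
  finally show ?thesis .
qed

lemma parity_fibres:
  assumes "finite F"
  shows "parity {c. parity {f\<in>F. col f = Some c} \<and> P c} =
         parity {f\<in>F. case col f of None \<Rightarrow> False | Some c \<Rightarrow> P c}"
proof -
  define Y where "Y = {c. \<exists>f\<in>F. col f = Some c \<and> P c}"
  have "Y \<subseteq> (\<lambda>f. the (col f)) ` F"
    by (force simp: Y_def)
  then have "finite Y"
    using assms by (meson finite_imageI finite_subset)
  have "{c. parity {f\<in>F. col f = Some c} \<and> P c} = {c\<in>Y. parity {f\<in>F. col f = Some c}}"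
    by (auto simp: Y_def dest: parity_imp_nonempty)
  moreover have "(SIGMA c:Y. {f\<in>F. col f = Some c}) =
      (\<lambda>f. (the (col f), f)) ` {f\<in>F. case col f of None \<Rightarrow> False | Some c \<Rightarrow> P c}"
    by (force simp: Y_def split: option.splits)
  moreover have "inj_on (\<lambda>f. (the (col f), f)) A" for A
    by (simp add: inj_on_def)
  ultimately show ?thesis
    using \<open>finite Y\<close> assms by (simp add: parity_Sigma [symmetric] parity_image)
qed

definition ext_codewords ::
  "nat \<Rightarrow> (nat \<Rightarrow> nat \<Rightarrow> bool) \<Rightarrow> nat \<Rightarrow> (nat \<Rightarrow> nat \<Rightarrow> bool) \<Rightarrow> nat
     \<Rightarrow> ('r \<Rightarrow> nat set) \<Rightarrow> 'r set \<Rightarrow> (nat + 'r) set set" where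
  "ext_codewords n H m L k E R =
     {X. finite X \<and> X \<subseteq> Inl ` {..<n} \<union> Inr ` R \<and>
         (\<forall>i<m. even (card {c \<in> X. ext_col H E i c})) \<and> (\<exists>l<k. odd (card {c \<in> X. ext_col L E l c}))}"

lemma ext_dist_ext_codewords:
  "ext_dist n H m L k E R = Inf ((\<lambda>X. enat (card X)) ` ext_codewords n H m L k E R)"
  by (simp add: ext_dist_def ext_codewords_def)

lemma ext_dist_antimono: "R1 \<subseteq> R2 \<Longrightarrow> ext_dist n H m L k E R2 \<le> ext_dist n H m L k E R1"
  unfolding ext_dist_def by (rule Inf_superset_mono) (auto, blast)

lemma inj_on_map_sum_id:
  assumes "inj_on h R" "X \<subseteq> Inl ` A \<union> Inr ` R"
  shows "inj_on (map_sum id h) X"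
proof (rule inj_onI)
  fix x y
  assume "x \<in> X" "y \<in> X" "map_sum id h x = map_sum id h y"
  moreover have "a \<in> R" if "Inr a \<in> X" for a
    using that assms(2) by blast
  ultimately show "x = y"
    using inj_onD [OF assms(1)] by (cases x; cases y) auto
qed

lemma ext_codewords_image:
  assumes h: "inj_on h R" and X: "X \<in> ext_codewords n H m L k (E \<circ> h) R"
  shows "map_sum id h ` X \<in> ext_codewords n H m L k E (h ` R)"
proof -
  have X_sub: "X \<subseteq> Inl ` {..<n} \<union> Inr ` R"
    using X by (simp add: ext_codewords_def)
  have inj: "inj_on (map_sum id h) X"
    using h X_sub by (rule inj_on_map_sum_id)
  have col: "ext_col M E i (map_sum id h c) = ext_col M (E \<circ> h) i c" for M i c
    by (cases c) auto
  have "{c \<in> map_sum id h ` X. ext_col M E i c} = map_sum id h ` {c \<in> X. ext_col M (E \<circ> h) i c}" for M i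
    using col by auto
  moreover have "inj_on (map_sum id h) {c \<in> X. ext_col M (E \<circ> h) i c}" for M i
    using inj by (rule inj_on_subset) blast
  ultimately have count: "card {c \<in> map_sum id h ` X. ext_col M E i c} = card {c \<in> X. ext_col M (E \<circ> h) i c}"
    for M i
    by (simp add: card_image)
  have "map_sum id h ` X \<subseteq> Inl ` {..<n} \<union> Inr ` h ` R"
    using X_sub by auto
  then show ?thesis
    using X by (simp add: ext_codewords_def count)
qed

lemma ext_dist_image_le:
  assumes "inj_on h R"
  shows "ext_dist n H m L k E (h ` R) \<le> ext_dist n H m L k (E \<circ> h) R"
  unfolding ext_dist_ext_codewords
proof (rule Inf_greatest)
  fix y
  assume "y \<in> (\<lambda>X. enat (card X)) ` ext_codewords n H m L k (E \<circ> h) R"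
  then obtain X where X: "X \<in> ext_codewords n H m L k (E \<circ> h) R" "y = enat (card X)"
    by blast
  have "inj_on (map_sum id h) X"
    using assms X(1) by (intro inj_on_map_sum_id) (auto simp: ext_codewords_def)
  then have "card (map_sum id h ` X) = card X"
    by (rule card_image)
  then show "Inf ((\<lambda>X. enat (card X)) ` ext_codewords n H m L k E (h ` R)) \<le> y"
    using ext_codewords_image [OF assms X(1)] X(2) by (metis Inf_lower imageI)
qed

lemma ext_dist_image_involution:
  assumes "\<And>x. h (h x) = x"
  shows "ext_dist n H m L k E (h ` R) = ext_dist n H m L k (E \<circ> h) R"
proof (rule antisym)
  have inj: "inj_on h A" for A
    by (metis assms inj_onI)
  show "ext_dist n H m L k E (h ` R) \<le> ext_dist n H m L k (E \<circ> h) R"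
    by (rule ext_dist_image_le [OF inj])
  have "ext_dist n H m L k (E \<circ> h) (h ` h ` R) \<le> ext_dist n H m L k (E \<circ> h \<circ> h) (h ` R)"
    by (rule ext_dist_image_le [OF inj])
  moreover have "h ` h ` R = R" "E \<circ> h \<circ> h = E"
    by (simp_all add: image_image comp_def assms)
  ultimately show "ext_dist n H m L k (E \<circ> h) R \<le> ext_dist n H m L k E (h ` R)"
    by simp
qed


declare supp.simps [simp del]

lemma ex_chk: "(\<exists>c. P c) \<longleftrightarrow> (\<exists>i. P (XC i)) \<or> (\<exists>k. P (ZC k))"
  by (metis chk.exhaust)

lemma XC_in_checks [simp]: "XC i \<in> checks C \<longleftrightarrow> i < mx C"
  by (auto simp: checks_def)

lemma ZC_in_checks [simp]: "ZC k \<in> checks C \<longleftrightarrow> k < mz C"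
  by (auto simp: checks_def)

lemma finite_supp [simp]: "finite (supp C c)"
  by (cases c) (auto simp: supp.simps)

lemma supp_less: "q \<in> supp C c \<Longrightarrow> q < nq C"
  by (cases c) (auto simp: supp.simps)

lemma CNOT_in_round_layer:
  "CNOT a b \<in> round_layer C S r t \<longleftrightarrow>
    (\<exists>i q. a = Anc (XC i) \<and> b = Data q \<and> i < mx C \<and> q \<in> supp C (XC i) \<and> cnT S (XC i) q = t) \<or>
    (\<exists>k q. a = Data q \<and> b = Anc (ZC k) \<and> k < mz C \<and> q \<in> supp C (ZC k) \<and> cnT S (ZC k) q = t)"
  unfolding round_layer_def by (simp add: ex_chk)

lemma PrepZ_in_round_layer:
  "PrepZ u \<in> round_layer C S r t \<longleftrightarrow> (\<exists>k. u = Anc (ZC k) \<and> k < mz C \<and> prepT S (ZC k) = t)"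
  unfolding round_layer_def by (simp add: ex_chk)

lemma PrepX_in_round_layer:
  "PrepX u \<in> round_layer C S r t \<longleftrightarrow> (\<exists>i. u = Anc (XC i) \<and> i < mx C \<and> prepT S (XC i) = t)"
  unfolding round_layer_def by (simp add: ex_chk)

lemma MeasX_in_round_layer:
  "MeasX u m \<in> round_layer C S r t \<longleftrightarrow>
    (\<exists>i. u = Anc (XC i) \<and> m = MAnc r (XC i) \<and> i < mx C \<and> measT S (XC i) = t)"
  unfolding round_layer_def by (simp add: ex_chk)

lemma MeasZ_in_round_layer:
  "MeasZ u m \<in> round_layer C S r t \<longleftrightarrow>
    (\<exists>k. u = Anc (ZC k) \<and> m = MAnc r (ZC k) \<and> k < mz C \<and> measT S (ZC k) = t)"
  unfolding round_layer_def by (simp add: ex_chk)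

lemma Idle_in_round_layer:
  "Idle u \<in> round_layer C S r t \<longleftrightarrow>
    (\<exists>c. u = Anc c \<and> c \<in> checks C \<and> t \<noteq> prepT S c \<and> t \<noteq> measT S c \<and> t \<notin> cnT S c ` supp C c) \<or>
    (\<exists>q. u = Data q \<and> q < nq C \<and> (\<forall>c\<in>checks C. q \<in> supp C c \<longrightarrow> cnT S c q \<noteq> t))"
  unfolding round_layer_def by blast

lemma round_layer_op_cases:
  assumes "p \<in> round_layer C S r t"
  shows "(\<exists>i. p = PrepX (Anc (XC i))) \<or> (\<exists>u. p = PrepZ u) \<or> (\<exists>u m. p = MeasX u m) \<or>
    (\<exists>u m. p = MeasZ u m) \<or> (\<exists>i q. p = CNOT (Anc (XC i)) (Data q)) \<or>
    (\<exists>k q. p = CNOT (Data q) (Anc (ZC k)) \<and> k < mz C \<and> q \<in> supp C (ZC k) \<and> cnT S (ZC k) q = t) \<or>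
    (\<exists>i. p = Idle (Anc (XC i))) \<or>
    (\<exists>k. p = Idle (Anc (ZC k)) \<and> k < mz C \<and> t \<noteq> prepT S (ZC k)) \<or>
    (\<exists>q. p = Idle (Data q))"
  using assms unfolding round_layer_def by (simp add: ex_chk) blast

lemma round_layer_reset_Data [simp]: "\<not> reset (round_layer C S r t) (Data q)"
  by (simp add: reset_def PrepZ_in_round_layer PrepX_in_round_layer)

lemma round_layer_reset_AncZ:
  "reset (round_layer C S r t) (Anc (ZC k)) \<longleftrightarrow> k < mz C \<and> prepT S (ZC k) = t"
  by (simp add: reset_def PrepZ_in_round_layer PrepX_in_round_layer)

lemma round_layer_reset_AncX:
  "reset (round_layer C S r t) (Anc (XC i)) \<longleftrightarrow> i < mx C \<and> prepT S (XC i) = t"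
  by (simp add: reset_def PrepZ_in_round_layer PrepX_in_round_layer)

lemma round_layer_CNOT_from_Data:
  "{b. CNOT (Data q) b \<in> round_layer C S r t \<and> Z b} =
   (\<lambda>k. Anc (ZC k)) ` {k. k < mz C \<and> q \<in> supp C (ZC k) \<and> cnT S (ZC k) q = t \<and> Z (Anc (ZC k))}"
  by (auto simp: CNOT_in_round_layer)

lemma round_layer_CNOT_from_AncZ: "{b. CNOT (Anc (ZC k)) b \<in> round_layer C S r t \<and> Z b} = {}"
  by (auto simp: CNOT_in_round_layer)

lemma round_layer_CNOT_from_AncX:
  "{b. CNOT (Anc (XC i)) b \<in> round_layer C S r t \<and> Z b} =
   Data ` {q \<in> supp C (XC i). i < mx C \<and> cnT S (XC i) q = t \<and> Z (Data q)}"
  by (auto simp: CNOT_in_round_layer)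

lemma fst_layer_apply:
  "fst (layer_apply L F) u = (\<not> reset L u \<and> (fst F u \<noteq> parity {a. CNOT a u \<in> L \<and> fst F a}))"
  by (simp add: layer_apply_def parity_def)

lemma snd_layer_apply:
  "snd (layer_apply L F) u = (\<not> reset L u \<and> (snd F u \<noteq> parity {b. CNOT u b \<in> L \<and> snd F b}))"
  by (simp add: layer_apply_def parity_def)

lemma layer_apply_no_X: "fst F = (\<lambda>_. False) \<Longrightarrow> fst (layer_apply L F) = (\<lambda>_. False)"
  by (simp add: layer_apply_def)

lemma layer_flips_parity:
  "layer_flips L F m =
    (parity {u. MeasZ u m \<in> L \<and> fst F u} \<noteq> parity {u. MeasX u m \<in> L \<and> snd F u})"
  by (simp add: layer_flips_def parity_def)

lemma round_layer_no_flip_MData: "\<not> layer_flips (round_layer C S r t) F (MData q)"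
  by (simp add: layer_flips_def MeasX_in_round_layer MeasZ_in_round_layer)

text \<open>In the \<open>X\<close>-basis experiment only the \<open>Z\<close> part of a frame is ever observed; it spreads
  from the target to the control of a CNOT.\<close>

lemma round_layer_Z_Data:
  "snd (layer_apply (round_layer C S r t) F) (Data q) =
    (snd F (Data q) \<noteq>
      parity {k. k < mz C \<and> q \<in> supp C (ZC k) \<and> cnT S (ZC k) q = t \<and> snd F (Anc (ZC k))})"
proof -
  have "parity {b. CNOT (Data q) b \<in> round_layer C S r t \<and> snd F b} =
        parity {k. k < mz C \<and> q \<in> supp C (ZC k) \<and> cnT S (ZC k) q = t \<and> snd F (Anc (ZC k))}"
    unfolding round_layer_CNOT_from_Data by (rule parity_image) (auto simp: inj_on_def)
  then show ?thesis
    by (simp add: snd_layer_apply)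
qed

lemma round_layer_Z_AncZ:
  "snd (layer_apply (round_layer C S r t) F) (Anc (ZC k)) =
    (\<not> (k < mz C \<and> prepT S (ZC k) = t) \<and> snd F (Anc (ZC k)))"
  by (simp add: snd_layer_apply round_layer_CNOT_from_AncZ round_layer_reset_AncZ)

lemma round_layer_Z_AncX:
  "snd (layer_apply (round_layer C S r t) F) (Anc (XC i)) =
    (\<not> (i < mx C \<and> prepT S (XC i) = t) \<and>
      (snd F (Anc (XC i)) \<noteq>
        parity {q \<in> supp C (XC i). i < mx C \<and> cnT S (XC i) q = t \<and> snd F (Data q)}))"
proof -
  have "parity {b. CNOT (Anc (XC i)) b \<in> round_layer C S r t \<and> snd F b} =
        parity {q \<in> supp C (XC i). i < mx C \<and> cnT S (XC i) q = t \<and> snd F (Data q)}"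
    unfolding round_layer_CNOT_from_AncX by (rule parity_image) (auto simp: inj_on_def)
  then show ?thesis
    by (simp add: snd_layer_apply round_layer_reset_AncX)
qed

lemma propagate_flip_measured_later:
  "propagate Ls g n F m \<Longrightarrow>
    \<exists>g'. g \<le> g' \<and> g' < g + n \<and> (\<exists>u. MeasZ u m \<in> Ls g' \<or> MeasX u m \<in> Ls g')"
proof (induction n arbitrary: g F)
  case 0
  then show ?case by simp
next
  case (Suc n)
  show ?case
  proof (cases "layer_flips (Ls g) F m")
    case True
    then have "{u. MeasZ u m \<in> Ls g \<and> fst F u} \<noteq> {} \<or> {u. MeasX u m \<in> Ls g \<and> snd F u} \<noteq> {}"
      unfolding layer_flips_def by (auto simp del: Collect_empty_eq)
    then show ?thesis
      by (intro exI [of _ g]) auto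
  next
    case False
    then have "propagate Ls (Suc g) n (layer_apply (Ls g) F) m"
      using Suc.prems by simp
    from Suc.IH [OF this] show ?thesis
      by (metis Suc_leD add_Suc_right add_Suc_shift)
  qed
qed

definition logical_fault_sets :: "(nat \<Rightarrow> layer) \<Rightarrow> nat \<Rightarrow> meas set set \<Rightarrow> meas set set \<Rightarrow> mech set set" where
  "logical_fault_sets Ls N Ds Obs =
     {F. finite F \<and> F \<subseteq> mechs Ls N \<and> inj_on (\<lambda>(g, p, e). (g, p)) F \<and>
         (\<forall>D \<in> Ds. even (card {m \<in> D. total_flips Ls N F m})) \<and>
         (\<exists>Ob \<in> Obs. odd (card {m \<in> Ob. total_flips Ls N F m}))}"

lemma circuit_distance_logical_fault_sets:
  "circuit_distance Ls N Ds Obs = Inf ((\<lambda>F. enat (card F)) ` logical_fault_sets Ls N Ds Obs)"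
  by (simp add: circuit_distance_def logical_fault_sets_def)

fun op_qubits :: "op \<Rightarrow> qubit set" where
  "op_qubits (PrepZ u) = {u}"
| "op_qubits (PrepX u) = {u}"
| "op_qubits (MeasZ u m) = {u}"
| "op_qubits (MeasX u m) = {u}"
| "op_qubits (CNOT a b) = {a, b}"
| "op_qubits (Idle u) = {u}"

lemma fault_ok_Z_subset: "fault_ok p (PauliF X Z) \<Longrightarrow> Z \<subseteq> op_qubits p"
  by (cases p) auto

section \<open>The \<open>X\<close>-basis memory experiment\<close>

locale x_memory =
  fixes C :: css and S :: sched and R :: nat
  assumes valid: "valid_sec C S" and rounds_pos: "1 \<le> R"
begin

abbreviation "P \<equiv> per S"
abbreviation "Ls \<equiv> mem_layer C S BX R"
abbreviation "N \<equiv> mem_len S R"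

lemma N_eq: "N = R * P + 2"
  by (simp add: mem_len_def)

lemma check_times: "c \<in> checks C \<Longrightarrow> prepT S c < measT S c \<and> measT S c < P"
  using valid by (auto simp: valid_sec_def)

lemma cnot_time: "c \<in> checks C \<Longrightarrow> q \<in> supp C c \<Longrightarrow> prepT S c < cnT S c q \<and> cnT S c q < measT S c"
  using valid by (auto simp: valid_sec_def)

lemma cnot_times_inj: "c \<in> checks C \<Longrightarrow> inj_on (cnT S c) (supp C c)"
  using valid by (auto simp: valid_sec_def)

lemma round_time_bound:
  assumes "r < R" "t < P"
  shows "r * P + t < R * P"
proof -
  have "r * P + t < Suc r * P"
    using assms(2) by simp
  also have "\<dots> \<le> R * P"
    using assms(1) by (intro mult_right_mono) auto
  finally show ?thesis .
qed

lemma last_round_le: "t < P \<Longrightarrow> Suc ((R - 1) * P + t) \<le> R * P"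
  using round_time_bound [of "R - 1" t] rounds_pos by simp

lemma layer_round:
  assumes "r < R" "t < P"
  shows "Ls (Suc (r * P + t)) = round_layer C S r t"
proof -
  have "r * P + t < R * P" "(r * P + t) div P = r" "(r * P + t) mod P = t"
    using assms round_time_bound by auto
  then show ?thesis
    by (simp add: mem_layer_def)
qed

lemma layer_zero: "Ls 0 = {PrepX (Data q) | q. q < nq C} \<union> anc_idle C"
  by (simp add: mem_layer_def)

lemma layer_final: "Ls (Suc (R * P)) = {MeasX (Data q) (MData q) | q. q < nq C} \<union> anc_idle C"
  by (simp add: mem_layer_def)

lemma layer_index_round:
  assumes "1 \<le> g" "g \<le> R * P"
  obtains r t where "g = Suc (r * P + t)" "r < R" "t < P"
proof
  have "P > 0"
    using assms by (cases "P = 0") auto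
  then show "(g - 1) mod P < P"
    by simp
  show "g = Suc ((g - 1) div P * P + (g - 1) mod P)"
    using assms by simp
  show "(g - 1) div P < R"
    using assms \<open>P > 0\<close> by (simp add: less_mult_imp_div_less)
qed

lemma anc_idle_no_meas: "MeasX u m \<notin> anc_idle C" "MeasZ u m \<notin> anc_idle C"
  by (auto simp: anc_idle_def)

lemma MAnc_measured_layer:
  assumes "MeasZ u (MAnc r c) \<in> Ls g \<or> MeasX u (MAnc r c) \<in> Ls g"
  shows "g = Suc (r * P + measT S c) \<and> r < R \<and> c \<in> checks C"
proof -
  have "g \<noteq> 0"
    using assms anc_idle_no_meas by (cases "g = 0") (auto simp: layer_zero)
  moreover have "g \<noteq> Suc (R * P)"
    using assms anc_idle_no_meas by (cases "g = Suc (R * P)") (auto simp: layer_final)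
  moreover have "g \<le> Suc (R * P)"
    using assms by (rule contrapos_pp) (simp add: mem_layer_def)
  ultimately obtain r' t where rt: "g = Suc (r' * P + t)" "r' < R" "t < P"
    using layer_index_round [of g] by (metis One_nat_def Suc_leI le_SucE not_gr_zero)
  then have "MeasZ u (MAnc r c) \<in> round_layer C S r' t \<or> MeasX u (MAnc r c) \<in> round_layer C S r' t"
    using assms layer_round by simp
  then show ?thesis
    using rt by (auto simp: MeasX_in_round_layer MeasZ_in_round_layer)
qed

lemma no_flip_after_measurement:
  assumes "g > Suc (r * P + measT S c)"
  shows "\<not> propagate Ls g n F (MAnc r c)"
proof
  assume "propagate Ls g n F (MAnc r c)"
  then obtain g' u where "g \<le> g'" "MeasZ u (MAnc r c) \<in> Ls g' \<or> MeasX u (MAnc r c) \<in> Ls g'"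
    using propagate_flip_measured_later by blast
  with assms show False
    using MAnc_measured_layer by fastforce
qed

text \<open>A \<open>Z\<close> error on the ancilla of a \<open>Z\<close> check that is already prepared but has not yet
  interacted with data qubit \<open>q\<close> is copied onto \<open>q\<close> by the pending CNOT.\<close>

definition z_pending :: "nat \<Rightarrow> nat \<Rightarrow> nat \<Rightarrow> bool" where
  "z_pending g k q \<longleftrightarrow>
     1 \<le> g \<and> g \<le> R * P \<and> prepT S (ZC k) < (g - 1) mod P \<and> (g - 1) mod P \<le> cnT S (ZC k) q"

definition data_flip :: "nat \<Rightarrow> (qubit \<Rightarrow> bool) \<Rightarrow> nat \<Rightarrow> bool" where
  "data_flip g Z q \<longleftrightarrow>
     Z (Data q) \<noteq> parity {k. k < mz C \<and> q \<in> supp C (ZC k) \<and> Z (Anc (ZC k)) \<and> z_pending g k q}"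

lemma z_pending_round:
  "r < R \<Longrightarrow> t < P \<Longrightarrow> z_pending (Suc (r * P + t)) k q \<longleftrightarrow> prepT S (ZC k) < t \<and> t \<le> cnT S (ZC k) q"
  using round_time_bound [of r t] by (simp add: z_pending_def)

lemma z_pending_final: "\<not> z_pending (Suc (R * P)) k q"
  by (simp add: z_pending_def)

lemma z_pending_next:
  assumes "r < R" "t < P" "k < mz C" "q \<in> supp C (ZC k)"
  shows "z_pending (Suc (Suc (r * P + t))) k q \<longleftrightarrow> prepT S (ZC k) < Suc t \<and> Suc t \<le> cnT S (ZC k) q"
proof (cases "Suc t < P")
  case True
  then show ?thesis
    using z_pending_round [of r "Suc t" k q] assms by simp
next
  case False
  then have "Suc t = P"
    using assms by simp
  then have e: "Suc (Suc (r * P + t)) = Suc (Suc r * P)"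
    by simp
  have "cnT S (ZC k) q < P"
    using cnot_time [of "ZC k" q] check_times [of "ZC k"] assms by auto
  moreover have "\<not> z_pending (Suc (Suc r * P)) k q"
  proof (cases "Suc r < R")
    case True
    then show ?thesis
      using z_pending_round [of "Suc r" 0 k q] assms by simp
  next
    case False
    then have "Suc r = R"
      using assms by simp
    then show ?thesis
      using z_pending_final by simp
  qed
  ultimately show ?thesis
    unfolding e using \<open>Suc t = P\<close> by simp
qed

lemma data_flip_step:
  assumes "r < R" "t < P"
  shows "data_flip (Suc (r * P + t)) Z q =
    data_flip (Suc (Suc (r * P + t))) (snd (layer_apply (round_layer C S r t) (X, Z))) q"
proof -
  let ?Z' = "snd (layer_apply (round_layer C S r t) (X, Z))"
  let ?now = "{k. k < mz C \<and> q \<in> supp C (ZC k) \<and> cnT S (ZC k) q = t \<and> Z (Anc (ZC k))}"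
  let ?later = "{k. k < mz C \<and> q \<in> supp C (ZC k) \<and> ?Z' (Anc (ZC k)) \<and> z_pending (Suc (Suc (r * P + t))) k q}"
  have split: "{k. k < mz C \<and> q \<in> supp C (ZC k) \<and> Z (Anc (ZC k)) \<and> z_pending (Suc (r * P + t)) k q} =
      ?now \<union> ?later"
    using assms cnot_time [of "ZC _" q]
    by (auto simp: z_pending_round z_pending_next round_layer_Z_AncZ)
  have "?now \<inter> ?later = {}"
    using assms by (auto simp: z_pending_next)
  then have "data_flip (Suc (r * P + t)) Z q = (Z (Data q) \<noteq> (parity ?now \<noteq> parity ?later))"
    unfolding data_flip_def split by (simp add: parity_Un)
  also have "\<dots> = data_flip (Suc (Suc (r * P + t))) ?Z' q"
    unfolding data_flip_def round_layer_Z_Data by auto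
  finally show ?thesis .
qed

lemma final_layer_flips_MData:
  assumes "q < nq C"
  shows "layer_flips (Ls (Suc (R * P))) F (MData q) = snd F (Data q)"
proof -
  have "{u. MeasX u (MData q) \<in> Ls (Suc (R * P)) \<and> snd F u} = (if snd F (Data q) then {Data q} else {})"
    using assms anc_idle_no_meas by (auto simp: layer_final)
  then show ?thesis
    using anc_idle_no_meas by (simp add: layer_flips_parity layer_final parity_def)
qed

lemma propagate_MData:
  assumes "1 \<le> g" "g \<le> Suc (R * P)" "q < nq C"
  shows "propagate Ls g (N - g) F (MData q) = data_flip g (snd F) q"
  using assms(1,2)
proof (induction "N - g" arbitrary: g F)
  case 0
  then show ?case
    by (simp add: N_eq)
next
  case (Suc n)
  show ?case
  proof (cases "g = Suc (R * P)")
    case True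
    then have "N - g = 1"
      by (simp add: N_eq)
    then show ?thesis
      using True final_layer_flips_MData [OF assms(3)] by (simp add: data_flip_def z_pending_final)
  next
    case False
    then obtain r t where rt: "g = Suc (r * P + t)" "r < R" "t < P"
      using Suc.prems layer_index_round by (metis le_SucE)
    then have layer: "Ls g = round_layer C S r t"
      using layer_round by simp
    have "propagate Ls g (N - g) F (MData q) = propagate Ls (Suc g) n (layer_apply (Ls g) F) (MData q)"
      unfolding Suc.hyps(2) [symmetric] by (simp add: round_layer_no_flip_MData layer)
    also have "\<dots> = data_flip (Suc g) (snd (layer_apply (Ls g) F)) q"
    proof -
      have "n = N - Suc g" "Suc g \<le> Suc (R * P)"
        using Suc.hyps(2) rt round_time_bound [of r t] by auto
      then show ?thesis
        using Suc.hyps(1) by simp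
    qed
    also have "\<dots> = data_flip g (snd F) q"
      using data_flip_step [OF rt(2,3), of "snd F" q "fst F"] layer rt(1) by simp
    finally show ?thesis .
  qed
qed

text \<open>Within a round, the measurement of \<open>X\<close> check \<open>i\<close> is flipped by the \<open>Z\<close> frame before
  time step \<open>t\<close> through three channels: a \<open>Z\<close> on its prepared ancilla; a \<open>Z\<close> on a data qubit
  of its support whose CNOT is still to come; and a \<open>Z\<close> on the ancilla of a \<open>Z\<close> check that
  is copied onto a common data qubit \<open>q\<close> before check \<open>i\<close> interacts with \<open>q\<close> (the
  \<open>pending_pairs\<close>).\<close>

definition pending_pairs :: "nat \<Rightarrow> (qubit \<Rightarrow> bool) \<Rightarrow> nat \<Rightarrow> (nat \<times> nat) set" where
  "pending_pairs t Z i =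
     {(q, k). k < mz C \<and> q \<in> supp C (XC i) \<and> q \<in> supp C (ZC k) \<and> Z (Anc (ZC k)) \<and>
       prepT S (ZC k) < t \<and> t \<le> cnT S (ZC k) q \<and> cnT S (ZC k) q < cnT S (XC i) q}"

definition x_anc_flip :: "nat \<Rightarrow> (qubit \<Rightarrow> bool) \<Rightarrow> nat \<Rightarrow> bool" where
  "x_anc_flip t Z i \<longleftrightarrow>
     (prepT S (XC i) < t \<and> Z (Anc (XC i))) \<noteq>
     (parity {q \<in> supp C (XC i). t \<le> cnT S (XC i) q \<and> Z (Data q)} \<noteq> parity (pending_pairs t Z i))"

lemma finite_pending_pairs: "finite (pending_pairs t Z i)"
proof (rule finite_subset)
  show "pending_pairs t Z i \<subseteq> supp C (XC i) \<times> {..<mz C}"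
    by (auto simp: pending_pairs_def)
qed simp

lemma pending_pairs_step:
  "pending_pairs t Z i =
     (SIGMA q:{q \<in> supp C (XC i). Suc t \<le> cnT S (XC i) q}.
        {k. k < mz C \<and> q \<in> supp C (ZC k) \<and> cnT S (ZC k) q = t \<and> Z (Anc (ZC k))}) \<union>
     pending_pairs (Suc t) (snd (layer_apply (round_layer C S r t) (X, Z))) i"
  (is "_ = ?now \<union> ?later")
proof (intro set_eqI iffI)
  fix x
  assume "x \<in> pending_pairs t Z i"
  then obtain q k where "x = (q, k)" "k < mz C" "q \<in> supp C (XC i)" "q \<in> supp C (ZC k)"
    "Z (Anc (ZC k))" "prepT S (ZC k) < t" "t \<le> cnT S (ZC k) q" "cnT S (ZC k) q < cnT S (XC i) q"
    by (auto simp: pending_pairs_def)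
  then show "x \<in> ?now \<union> ?later"
    by (cases "cnT S (ZC k) q = t") (auto simp: pending_pairs_def round_layer_Z_AncZ)
next
  fix x
  assume "x \<in> ?now \<union> ?later"
  then show "x \<in> pending_pairs t Z i"
  proof
    assume "x \<in> ?now"
    then obtain q k where "x = (q, k)" "q \<in> supp C (XC i)" "Suc t \<le> cnT S (XC i) q" "k < mz C"
      "q \<in> supp C (ZC k)" "cnT S (ZC k) q = t" "Z (Anc (ZC k))"
      by auto
    moreover have "prepT S (ZC k) < cnT S (ZC k) q"
      using cnot_time [of "ZC k" q] calculation by auto
    ultimately show ?thesis
      by (auto simp: pending_pairs_def)
  next
    assume "x \<in> ?later"
    then show ?thesis
      by (auto simp: pending_pairs_def round_layer_Z_AncZ)
  qed
qed

lemma x_anc_flip_step: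
  assumes i: "i < mx C" and t: "t < measT S (XC i)"
  shows "x_anc_flip t Z i = x_anc_flip (Suc t) (snd (layer_apply (round_layer C S r t) (X, Z))) i"
proof -
  let ?Z' = "snd (layer_apply (round_layer C S r t) (X, Z))"
  define A where "A = {q \<in> supp C (XC i). Suc t \<le> cnT S (XC i) q}"
  define K where "K q = {k. k < mz C \<and> q \<in> supp C (ZC k) \<and> cnT S (ZC k) q = t \<and> Z (Anc (ZC k))}" for q
  define Dnow where "Dnow = {q \<in> supp C (XC i). cnT S (XC i) q = t \<and> Z (Data q)}"
  define Dlater where "Dlater = {q \<in> supp C (XC i). Suc t \<le> cnT S (XC i) q \<and> Z (Data q)}"
  have finA: "finite A" and finK: "\<forall>q\<in>A. finite (K q)"
    by (simp_all add: A_def K_def)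
  have finite: "finite Dnow" "finite Dlater" "finite (SIGMA q:A. K q)"
    using finA finK by (simp_all add: Dnow_def Dlater_def)
  have data: "{q \<in> supp C (XC i). t \<le> cnT S (XC i) q \<and> Z (Data q)} = Dnow \<union> Dlater"
    "Dnow \<inter> Dlater = {}"
    by (auto simp: Dnow_def Dlater_def)
  have data': "parity {q \<in> supp C (XC i). Suc t \<le> cnT S (XC i) q \<and> ?Z' (Data q)} =
      (parity Dlater \<noteq> parity (SIGMA q:A. K q))"
  proof -
    have "{q \<in> supp C (XC i). Suc t \<le> cnT S (XC i) q \<and> ?Z' (Data q)} = {q \<in> A. Z (Data q) \<noteq> parity (K q)}"
      by (auto simp: A_def K_def round_layer_Z_Data)
    then have "parity {q \<in> supp C (XC i). Suc t \<le> cnT S (XC i) q \<and> ?Z' (Data q)} =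
        parity {q \<in> A. Z (Data q) \<noteq> parity (K q)}"
      by simp
    also have "\<dots> = (parity Dlater \<noteq> parity (SIGMA q:A. K q))"
      unfolding parity_filter_xor [OF finA] parity_Sigma [OF finA finK]
      by (simp add: A_def Dlater_def conj_ac)
    finally show ?thesis .
  qed
  have pairs: "pending_pairs t Z i = (SIGMA q:A. K q) \<union> pending_pairs (Suc t) ?Z' i"
    "(SIGMA q:A. K q) \<inter> pending_pairs (Suc t) ?Z' i = {}"
    using pending_pairs_step by (auto simp: A_def K_def pending_pairs_def)
  have anc: "(prepT S (XC i) < Suc t \<and> ?Z' (Anc (XC i))) =
      ((prepT S (XC i) < t \<and> Z (Anc (XC i))) \<noteq> parity Dnow)"
  proof -
    have "parity {q \<in> supp C (XC i). i < mx C \<and> cnT S (XC i) q = t \<and> snd (X, Z) (Data q)} = parity Dnow"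
      using i by (simp add: Dnow_def)
    moreover have "Dnow = {}" if "t \<le> prepT S (XC i)"
      using that cnot_time [of "XC i"] i by (force simp: Dnow_def)
    ultimately show ?thesis
      unfolding round_layer_Z_AncX using i
      by (cases "t < prepT S (XC i)"; cases "t = prepT S (XC i)") auto
  qed
  have "x_anc_flip t Z i = ((prepT S (XC i) < t \<and> Z (Anc (XC i))) \<noteq> ((parity Dnow \<noteq> parity Dlater) \<noteq>
           (parity (SIGMA q:A. K q) \<noteq> parity (pending_pairs (Suc t) ?Z' i))))"
    unfolding x_anc_flip_def data pairs
    using finite data pairs by (simp add: parity_Un finite_pending_pairs)
  also have "\<dots> = x_anc_flip (Suc t) ?Z' i"
    unfolding x_anc_flip_def data' anc by auto
  finally show ?thesis .
qed

lemma round_layer_flips_MAnc_X: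
  "layer_flips (round_layer C S r t) F (MAnc r' (XC i)) =
    (r' = r \<and> i < mx C \<and> measT S (XC i) = t \<and> snd F (Anc (XC i)))"
proof -
  have Z: "{u. MeasZ u (MAnc r' (XC i)) \<in> round_layer C S r t \<and> fst F u} = {}"
    by (auto simp: MeasZ_in_round_layer)
  have X: "{u. MeasX u (MAnc r' (XC i)) \<in> round_layer C S r t \<and> snd F u} =
     (if r' = r \<and> i < mx C \<and> measT S (XC i) = t \<and> snd F (Anc (XC i)) then {Anc (XC i)} else {})"
    by (auto simp: MeasX_in_round_layer)
  show ?thesis
    unfolding layer_flips_parity Z X by (simp add: parity_def)
qed

lemma propagate_MAnc_X:
  assumes i: "i < mx C" and r: "r < R" and t: "t \<le> measT S (XC i)"
  shows "propagate Ls (Suc (r * P + t)) (N - Suc (r * P + t)) F (MAnc r (XC i)) = x_anc_flip t (snd F) i"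
  using t
proof (induction "measT S (XC i) - t" arbitrary: t F)
  case 0
  then have t_meas: "t = measT S (XC i)"
    by simp
  then have "t < P"
    using check_times [of "XC i"] i by simp
  then have N: "N - Suc (r * P + t) = Suc (N - Suc (Suc (r * P + t)))"
    using round_time_bound [OF r, of t] by (simp add: N_eq)
  have "\<not> propagate Ls (Suc (Suc (r * P + t))) n G (MAnc r (XC i))" for n G
    by (rule no_flip_after_measurement) (simp add: t_meas)
  moreover have data: "{q \<in> supp C (XC i). t \<le> cnT S (XC i) q \<and> snd F (Data q)} = {}"
    and pairs: "pending_pairs t (snd F) i = {}"
    using cnot_time [of "XC i"] i t_meas by (force simp: pending_pairs_def)+
  then have "x_anc_flip t (snd F) i = snd F (Anc (XC i))"
    unfolding x_anc_flip_def data pairs using check_times [of "XC i"] i t_meas by simp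
  ultimately show ?case
    unfolding N using layer_round [OF r \<open>t < P\<close>] round_layer_flips_MAnc_X i t_meas by simp
next
  case (Suc d)
  then have t_meas: "t < measT S (XC i)"
    by simp
  then have "t < P"
    using check_times [of "XC i"] i by simp
  then have N: "N - Suc (r * P + t) = Suc (N - Suc (r * P + Suc t))"
    using round_time_bound [OF r, of t] by (simp add: N_eq)
  have "propagate Ls (Suc (r * P + t)) (N - Suc (r * P + t)) F (MAnc r (XC i)) =
        propagate Ls (Suc (r * P + Suc t)) (N - Suc (r * P + Suc t))
          (layer_apply (round_layer C S r t) F) (MAnc r (XC i))"
    unfolding N using layer_round [OF r \<open>t < P\<close>] round_layer_flips_MAnc_X t_meas by simp
  also have "\<dots> = x_anc_flip (Suc t) (snd (layer_apply (round_layer C S r t) F)) i"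
    using Suc.hyps t_meas by (metis Suc_diff_Suc Suc_inject Suc_leI)
  also have "\<dots> = x_anc_flip t (snd F) i"
    using x_anc_flip_step [OF i t_meas, of "snd F" r "fst F"] by simp
  finally show ?case .
qed

definition data_flips :: "mech \<Rightarrow> nat set" where
  "data_flips f = {q. q < nq C \<and> mech_effect Ls N f (MData q)}"

definition z_shaped :: "nat set \<Rightarrow> bool" where
  "z_shaped A \<longleftrightarrow>
     (\<exists>q0. A \<subseteq> {q0}) \<or> (\<exists>k<mz C. \<exists>s. A = {q \<in> supp C (ZC k). s \<le> cnT S (ZC k) q})"

lemma z_shaped_suffix: "k < mz C \<Longrightarrow> z_shaped {q \<in> supp C (ZC k). s \<le> cnT S (ZC k) q}"
  unfolding z_shaped_def by blast

lemma Z_suffix_cases: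
  assumes k: "k < mz C"
  obtains "{q \<in> supp C (ZC k). s \<le> cnT S (ZC k) q} = {}"
    | "{q \<in> supp C (ZC k). s \<le> cnT S (ZC k) q} = supp C (ZC k)"
    | rr where "rr \<in> resid_idx C S False" "{q \<in> supp C (ZC k). s \<le> cnT S (ZC k) q} = resid_set C S rr"
proof -
  let ?A = "{q \<in> supp C (ZC k). s \<le> cnT S (ZC k) q}"
  let ?f = "cnT S (ZC k)"
  assume empty: "?A = {} \<Longrightarrow> thesis" and full: "?A = supp C (ZC k) \<Longrightarrow> thesis"
    and resid: "\<And>rr. rr \<in> resid_idx C S False \<Longrightarrow> ?A = resid_set C S rr \<Longrightarrow> thesis"
  show thesis
  proof (cases "?A = {}")
    case True
    then show ?thesis by (rule empty)
  next
    case False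
    then have "Min (?f ` ?A) \<in> ?f ` ?A"
      by (intro Min_in) auto
    then obtain q0 where q0: "q0 \<in> ?A" "?f q0 = Min (?f ` ?A)"
      by auto
    then have first: "\<forall>q \<in> ?A. ?f q0 \<le> ?f q"
      by simp
    have A: "?A = resid_set C S (ZC k, q0)"
      using q0 first by (auto simp: resid_set_def)
    show ?thesis
    proof (cases "\<exists>q' \<in> supp C (ZC k). ?f q' < ?f q0")
      case True
      then have "(ZC k, q0) \<in> resid_idx C S False"
        using q0 k by (auto simp: resid_idx_def)
      then show ?thesis
        using A by (rule resid)
    next
      case False
      then have "?A = supp C (ZC k)"
        using q0 by force
      then show ?thesis by (rule full)
    qed
  qed
qed

lemma effect_Pauli_MData:
  assumes "g \<le> R * P" "q < nq C"
  shows "mech_effect Ls N (g, p, PauliF X Z) (MData q) \<longleftrightarrow>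
    (Data q \<in> Z) \<noteq> parity {k. k < mz C \<and> q \<in> supp C (ZC k) \<and> Anc (ZC k) \<in> Z \<and> z_pending (Suc g) k q}"
proof -
  have "mech_effect Ls N (g, p, PauliF X Z) (MData q) =
     propagate Ls (Suc g) (N - Suc g) ((\<lambda>u. u \<in> X), (\<lambda>u. u \<in> Z)) (MData q)"
    by simp
  also have "\<dots> = data_flip (Suc g) (\<lambda>u. u \<in> Z) q"
    using assms by (simp add: propagate_MData)
  finally show ?thesis
    by (simp add: data_flip_def)
qed

lemma data_flips_no_Z_anc:
  assumes "g \<le> R * P" "\<forall>k. Anc (ZC k) \<notin> Z"
  shows "data_flips (g, p, PauliF X Z) = {q. q < nq C \<and> Data q \<in> Z}"
  using assms by (auto simp: data_flips_def effect_Pauli_MData simp del: mech_effect.simps)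

lemma data_flips_one_Z_anc:
  assumes "g \<le> R * P" "\<forall>k. Anc (ZC k) \<in> Z \<longrightarrow> k = k0"
  shows "data_flips (g, p, PauliF X Z) =
    {q. q < nq C \<and> (Data q \<in> Z) \<noteq> (k0 < mz C \<and> q \<in> supp C (ZC k0) \<and> Anc (ZC k0) \<in> Z \<and> z_pending (Suc g) k0 q)}"
proof (rule set_eqI)
  fix q
  let ?K = "{k. k < mz C \<and> q \<in> supp C (ZC k) \<and> Anc (ZC k) \<in> Z \<and> z_pending (Suc g) k q}"
  have "?K \<subseteq> {k0}"
    using assms(2) by blast
  then have "?K = (if k0 \<in> ?K then {k0} else {})"
    by auto
  then have "parity ?K = (k0 \<in> ?K)"
    by (simp add: parity_def)
  then show "q \<in> data_flips (g, p, PauliF X Z) \<longleftrightarrow> q \<in> {q. q < nq C \<and> (Data q \<in> Z) \<noteq>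
      (k0 < mz C \<and> q \<in> supp C (ZC k0) \<and> Anc (ZC k0) \<in> Z \<and> z_pending (Suc g) k0 q)}"
    using effect_Pauli_MData [OF assms(1), of q p X Z]
    by (auto simp: data_flips_def simp del: mech_effect.simps)
qed

lemma z_shaped_data_flips_Idle_AncZ:
  assumes g: "g = Suc (r * P + t)" "r < R" "t < P" and k0: "k0 < mz C" and Z: "Z \<subseteq> {Anc (ZC k0)}"
  shows "z_shaped (data_flips (g, p, PauliF X Z))"
proof -
  have "g \<le> R * P"
    using g round_time_bound [of r t] by simp
  then have flips: "data_flips (g, p, PauliF X Z) =
      {q. q < nq C \<and> (Data q \<in> Z) \<noteq> (k0 < mz C \<and> q \<in> supp C (ZC k0) \<and> Anc (ZC k0) \<in> Z \<and> z_pending (Suc g) k0 q)}"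
    using Z by (intro data_flips_one_Z_anc) auto
  have pending: "z_pending (Suc g) k0 q \<longleftrightarrow> prepT S (ZC k0) < Suc t \<and> Suc t \<le> cnT S (ZC k0) q"
    if "q \<in> supp C (ZC k0)" for q
    using z_pending_next [OF g(2,3) k0 that] g(1) by simp
  show ?thesis
  proof (cases "Anc (ZC k0) \<in> Z \<and> prepT S (ZC k0) < Suc t")
    case True
    then have "data_flips (g, p, PauliF X Z) = {q \<in> supp C (ZC k0). Suc t \<le> cnT S (ZC k0) q}"
      unfolding flips using Z k0 pending supp_less by blast
    then show ?thesis
      using z_shaped_suffix [OF k0] by simp
  next
    case False
    then have "data_flips (g, p, PauliF X Z) = {}"
      unfolding flips using Z pending by blast
    then show ?thesis
      by (simp add: z_shaped_def)
  qed
qed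

text \<open>A \<open>Z \<otimes> Z\<close> error after a CNOT of a \<open>Z\<close> check is the hook fault that leaves a residual
  error on the data.\<close>

lemma data_flips_CNOT_ZZ:
  assumes g: "g = Suc (r * P + cnT S (ZC k) q0)" "r < R" and k: "k < mz C" and q0: "q0 \<in> supp C (ZC k)"
  shows "data_flips (g, p, PauliF X {Data q0, Anc (ZC k)}) = resid_set C S (ZC k, q0)"
proof -
  let ?t = "cnT S (ZC k) q0"
  have "prepT S (ZC k) < ?t" "?t < P"
    using cnot_time [of "ZC k" q0] check_times [of "ZC k"] k q0 by auto
  then have pending: "z_pending (Suc g) k q \<longleftrightarrow> Suc ?t \<le> cnT S (ZC k) q"
    if "q \<in> supp C (ZC k)" for q
    using z_pending_next [OF g(2) \<open>?t < P\<close> k that] g(1) by simp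
  have "g \<le> R * P"
    using g round_time_bound [OF g(2) \<open>?t < P\<close>] by simp
  then have flips: "data_flips (g, p, PauliF X {Data q0, Anc (ZC k)}) =
      {q. q < nq C \<and> (q = q0) \<noteq> (q \<in> supp C (ZC k) \<and> z_pending (Suc g) k q)}"
    using k by (subst data_flips_one_Z_anc [of _ _ k]) auto
  have other: "cnT S (ZC k) q \<noteq> ?t" if "q \<in> supp C (ZC k)" "q \<noteq> q0" for q
    using cnot_times_inj [of "ZC k"] k q0 that by (auto dest: inj_onD)
  show ?thesis
  proof (rule set_eqI)
    fix q
    show "q \<in> data_flips (g, p, PauliF X {Data q0, Anc (ZC k)}) \<longleftrightarrow> q \<in> resid_set C S (ZC k, q0)"
      unfolding flips resid_set_def using q0 pending [of q] other [of q] supp_less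
      by (cases "q = q0") (auto simp: pending)
  qed
qed

lemma z_shaped_data_flips_CNOT_AncZ:
  assumes g: "g = Suc (r * P + t)" "r < R" "t < P" and k0: "k0 < mz C"
    and q0: "q0 \<in> supp C (ZC k0)" "cnT S (ZC k0) q0 = t" and Z: "Z \<subseteq> {Data q0, Anc (ZC k0)}"
  shows "z_shaped (data_flips (g, p, PauliF X Z))"
proof -
  have "g \<le> R * P"
    using g round_time_bound [of r t] by simp
  then have flips: "data_flips (g, p, PauliF X Z) =
      {q. q < nq C \<and> (Data q \<in> Z) \<noteq> (k0 < mz C \<and> q \<in> supp C (ZC k0) \<and> Anc (ZC k0) \<in> Z \<and> z_pending (Suc g) k0 q)}"
    using Z by (intro data_flips_one_Z_anc) auto
  have "prepT S (ZC k0) < t"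
    using cnot_time [of "ZC k0" q0] k0 q0 by simp
  then have pending: "z_pending (Suc g) k0 q \<longleftrightarrow> Suc t \<le> cnT S (ZC k0) q"
    if "q \<in> supp C (ZC k0)" for q
    using z_pending_next [OF g(2,3) k0 that] g(1) by simp
  consider "Anc (ZC k0) \<notin> Z" | "Anc (ZC k0) \<in> Z" "Data q0 \<notin> Z" | "Z = {Data q0, Anc (ZC k0)}"
    using Z by blast
  then show ?thesis
  proof cases
    case 1
    then have "data_flips (g, p, PauliF X Z) \<subseteq> {q0}"
      unfolding flips using Z by blast
    then show ?thesis
      by (auto simp: z_shaped_def)
  next
    case 2
    then have "data_flips (g, p, PauliF X Z) = {q \<in> supp C (ZC k0). Suc t \<le> cnT S (ZC k0) q}"
      unfolding flips using Z k0 pending supp_less by blast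
    then show ?thesis
      using z_shaped_suffix [OF k0] by simp
  next
    case 3
    then show ?thesis
      using data_flips_CNOT_ZZ [OF _ g(2) k0 q0(1)] g(1) q0(2) z_shaped_suffix [OF k0]
      by (simp add: resid_set_def)
  qed
qed

lemma z_shaped_data_flips_round:
  assumes g: "g = Suc (r * P + t)" "r < R" "t < P" and p: "p \<in> round_layer C S r t"
    and ok: "fault_ok p (PauliF X Z)"
  shows "z_shaped (data_flips (g, p, PauliF X Z))"
proof -
  have Z: "Z \<subseteq> op_qubits p"
    using ok by (rule fault_ok_Z_subset)
  have gl: "g \<le> R * P"
    using g round_time_bound [of r t] by simp
  have no_Z_anc: "z_shaped (data_flips (g, p, PauliF X Z))"
    if "\<forall>k. Anc (ZC k) \<notin> Z" "\<forall>q. Data q \<in> Z \<longrightarrow> q = q0" for q0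
    using that gl by (auto simp: data_flips_no_Z_anc z_shaped_def)
  from round_layer_op_cases [OF p] show ?thesis
  proof (elim disjE exE conjE)
    fix i
    assume "p = PrepX (Anc (XC i))"
    then show ?thesis
      using Z by (intro no_Z_anc [of 0]) auto
  next
    fix k0 q0
    assume "p = CNOT (Data q0) (Anc (ZC k0))" "k0 < mz C" "q0 \<in> supp C (ZC k0)" "cnT S (ZC k0) q0 = t"
    then show ?thesis
      using z_shaped_data_flips_CNOT_AncZ g Z by simp
  next
    fix k0
    assume "p = Idle (Anc (ZC k0))" "k0 < mz C"
    then show ?thesis
      using z_shaped_data_flips_Idle_AncZ g Z by simp
  next
    fix i q0
    assume "p = CNOT (Anc (XC i)) (Data q0)"
    then show ?thesis
      using Z by (intro no_Z_anc [of q0]) auto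
  next
    fix q0
    assume "p = Idle (Data q0)"
    then show ?thesis
      using Z by (intro no_Z_anc [of q0]) auto
  next
    fix u
    assume "p = PrepZ u"
    then show ?thesis
      using ok by (intro no_Z_anc [of 0]) auto
  next
    fix i
    assume "p = Idle (Anc (XC i))"
    then show ?thesis
      using Z by (intro no_Z_anc [of 0]) auto
  qed (use ok in auto)
qed

lemma z_shaped_data_flips:
  assumes f: "f \<in> mechs Ls N"
  shows "z_shaped (data_flips f)"
proof -
  obtain g p e where f_eq: "f = (g, p, e)" and g: "g < N" and p: "p \<in> Ls g" and ok: "fault_ok p e"
    using f by (auto simp: mechs_def)
  show ?thesis
  proof (cases e)
    case FlipF
    have "data_flips f \<subseteq> {q. meas_label p = Some (MData q)}"
      by (auto simp: data_flips_def f_eq FlipF)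
    also have "\<dots> \<subseteq> {case meas_label p of Some (MData q) \<Rightarrow> q | _ \<Rightarrow> 0}"
      by auto
    finally show ?thesis
      by (auto simp: z_shaped_def)
  next
    case (PauliF X Z)
    have Z: "Z \<subseteq> op_qubits p"
      using ok PauliF by (simp add: fault_ok_Z_subset)
    consider "g = 0" | "g = Suc (R * P)" | r t where "g = Suc (r * P + t)" "r < R" "t < P"
      using g layer_index_round [of g] by (metis N_eq One_nat_def Suc_leI add_2_eq_Suc' less_Suc_eq_le not_gr_zero le_SucE)
    then show ?thesis
    proof cases
      case 1
      then obtain u where "Z \<subseteq> {u}"
        using p Z by (auto simp: layer_zero anc_idle_def)
      moreover have "\<not> z_pending (Suc 0) k q" for k q
        by (simp add: z_pending_def)
      ultimately have "data_flips f \<subseteq> {q. Data q \<in> Z}"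
        using 1 by (auto simp: data_flips_def f_eq PauliF effect_Pauli_MData simp del: mech_effect.simps)
      then show ?thesis
        using \<open>Z \<subseteq> {u}\<close> by (cases u) (auto simp: z_shaped_def)
    next
      case 2
      then have "data_flips f = {}"
        by (simp add: data_flips_def f_eq PauliF N_eq)
      then show ?thesis
        by (simp add: z_shaped_def)
    next
      case 3
      then show ?thesis
        using z_shaped_data_flips_round p layer_round ok by (simp add: f_eq PauliF)
    qed
  qed
qed

end

section \<open>Lower bound: every logical fault set is as large as an extended codeword\<close>

lemma detector_first: "i < mx C \<Longrightarrow> {MAnc 0 (XC i)} \<in> detectors C BX R"
  unfolding detectors_def by auto

lemma detector_mid:
  "1 \<le> r \<Longrightarrow> r < R \<Longrightarrow> c \<in> checks C \<Longrightarrow> {MAnc (r - 1) c, MAnc r c} \<in> detectors C b R"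
  unfolding detectors_def by blast

lemma detector_last:
  "i < mx C \<Longrightarrow> insert (MAnc (R - 1) (XC i)) (MData ` supp C (XC i)) \<in> detectors C BX R"
  unfolding detectors_def by auto

lemma detectors_no_MAnc_X_flip:
  assumes D: "\<forall>D\<in>detectors C BX R. even (card {m\<in>D. T m})" and i: "i < mx C" and r: "r < R"
  shows "\<not> T (MAnc r (XC i))"
  using r
proof (induction r)
  case 0
  have "even (card {m \<in> {MAnc 0 (XC i)}. T m})"
    using D detector_first [OF i] by blast
  moreover have "{m \<in> {MAnc 0 (XC i)}. T m} = (if T (MAnc 0 (XC i)) then {MAnc 0 (XC i)} else {})"
    by auto
  ultimately show ?case
    by (cases "T (MAnc 0 (XC i))") auto
next
  case (Suc r)
  then have "{MAnc r (XC i), MAnc (Suc r) (XC i)} \<in> detectors C BX R"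
    using detector_mid [of "Suc r" R "XC i" C BX] i by simp
  then have "even (card {m \<in> {MAnc r (XC i), MAnc (Suc r) (XC i)}. T m})"
    using D by blast
  moreover have "\<not> T (MAnc r (XC i))"
    using Suc by simp
  then have "{m \<in> {MAnc r (XC i), MAnc (Suc r) (XC i)}. T m} =
      (if T (MAnc (Suc r) (XC i)) then {MAnc (Suc r) (XC i)} else {})"
    by auto
  ultimately show ?case
    by (cases "T (MAnc (Suc r) (XC i))") auto
qed

lemma detectors_X_check_even:
  assumes D: "\<forall>D\<in>detectors C BX R. even (card {m\<in>D. T m})" and i: "i < mx C" and R: "1 \<le> R"
  shows "\<not> parity {q \<in> supp C (XC i). T (MData q)}"
proof -
  have "\<not> T (MAnc (R - 1) (XC i))"
    using detectors_no_MAnc_X_flip [OF D i, of "R - 1"] R by simp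
  then have "{m \<in> insert (MAnc (R - 1) (XC i)) (MData ` supp C (XC i)). T m} =
      MData ` {q \<in> supp C (XC i). T (MData q)}"
    by auto
  moreover have "even (card {m \<in> insert (MAnc (R - 1) (XC i)) (MData ` supp C (XC i)). T m})"
    using D detector_last [OF i] by blast
  ultimately show ?thesis
    by (simp add: parity_def card_image inj_on_def)
qed

lemma observable_logical_odd:
  assumes "\<exists>Ob\<in>observables C BX. odd (card {m\<in>Ob. T m})"
  shows "\<exists>l<kx C. parity {q. q < nq C \<and> lx C l q \<and> T (MData q)}"
proof -
  obtain l where l: "l < kx C" "odd (card {m \<in> MData ` {q. q < nq C \<and> lx C l q}. T m})"
    using assms by auto
  moreover have "{m \<in> MData ` {q. q < nq C \<and> lx C l q}. T m} = MData ` {q. q < nq C \<and> lx C l q \<and> T (MData q)}"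
    by auto
  ultimately show ?thesis
    by (auto simp: parity_def card_image inj_on_def)
qed

locale x_memory_code = x_memory +
  assumes css: "css_with_logicals C"
begin

lemma hx_hz_orthogonal: "i < mx C \<Longrightarrow> k < mz C \<Longrightarrow> \<not> parity {q \<in> supp C (ZC k). hx C i q}"
  using css by (simp add: css_with_logicals_def css_code_def parity_def supp.simps conj_ac)

lemma lx_hz_orthogonal: "l < kx C \<Longrightarrow> k < mz C \<Longrightarrow> \<not> parity {q \<in> supp C (ZC k). lx C l q}"
  using css by (simp add: css_with_logicals_def logical_rows_def in_ker_def parity_def supp.simps conj_ac)

text \<open>The columns of the extended matrices: \<open>Inl q\<close> is data qubit \<open>q\<close>, \<open>Inr rr\<close> the residual
  error \<open>rr\<close> of a \<open>Z\<close> check.\<close>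

definition ext_columns :: "(nat + (chk \<times> nat)) set" where
  "ext_columns = Inl ` {..<nq C} \<union> Inr ` resid_idx C S False"

fun column_support :: "nat + (chk \<times> nat) \<Rightarrow> nat set" where
  "column_support (Inl q) = {q}"
| "column_support (Inr rr) = resid_set C S rr"

lemma column_support_less: "c \<in> ext_columns \<Longrightarrow> column_support c \<subseteq> {..<nq C}"
  by (auto simp: ext_columns_def resid_set_def resid_idx_def dest: supp_less)

lemma ext_col_column_support:
  "ext_col H (resid_set C S) i c = parity {q \<in> column_support c. H i q}"
proof (cases c)
  case (Inl q)
  then have "{q' \<in> column_support c. H i q'} = (if H i q then {q} else {})"
    by auto
  then show ?thesis
    using Inl by (simp add: parity_def)
qed (simp add: parity_def)

definition column_of :: "mech \<Rightarrow> (nat + (chk \<times> nat)) option \<Rightarrow> bool" where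
  "column_of f c = (case c of
     None \<Rightarrow> (\<forall>i<mx C. \<not> parity {q \<in> data_flips f. hx C i q}) \<and>
             (\<forall>l<kx C. \<not> parity {q \<in> data_flips f. lx C l q})
   | Some c \<Rightarrow> c \<in> ext_columns \<and> data_flips f = column_support c)"

lemma mech_has_column:
  assumes f: "f \<in> mechs Ls N"
  shows "\<exists>c. column_of f c"
proof -
  have invisible: "column_of f None" if "data_flips f = {} \<or> (\<exists>k<mz C. data_flips f = supp C (ZC k))"
    using that hx_hz_orthogonal lx_hz_orthogonal by (auto simp: column_of_def)
  have column: "column_of f (Some c)" if "c \<in> ext_columns" "data_flips f = column_support c" for c
    using that by (simp add: column_of_def)
  from z_shaped_data_flips [OF f] show ?thesis
    unfolding z_shaped_def
  proof (elim disjE exE conjE)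
    fix q0
    assume "data_flips f \<subseteq> {q0}"
    then consider "data_flips f = {}" | "data_flips f = {q0}" "q0 < nq C"
      by (auto simp: data_flips_def)
    then show ?thesis
      using invisible column [of "Inl q0"] by cases (auto simp: ext_columns_def)
  next
    fix k s
    assume k: "k < mz C" and flips: "data_flips f = {q \<in> supp C (ZC k). s \<le> cnT S (ZC k) q}"
    from k show ?thesis
    proof (cases rule: Z_suffix_cases [of k s])
      case (3 rr)
      then show ?thesis
        using flips column [of "Inr rr"] by (auto simp: ext_columns_def)
    qed (use flips invisible k in auto)
  qed
qed

definition column :: "mech \<Rightarrow> (nat + (chk \<times> nat)) option" where
  "column f = (SOME c. column_of f c)"

lemma column_of_column: "f \<in> mechs Ls N \<Longrightarrow> column_of f (column f)"
  unfolding column_def using mech_has_column by (rule someI_ex)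

text \<open>The columns met an odd number of times by a fault set form the extended codeword.\<close>

definition odd_columns :: "mech set \<Rightarrow> (nat + (chk \<times> nat)) set" where
  "odd_columns F = {c. parity {f\<in>F. column f = Some c}}"

lemma odd_columns_subset:
  assumes "F \<subseteq> mechs Ls N"
  shows "odd_columns F \<subseteq> ext_columns" "odd_columns F \<subseteq> the ` column ` F"
proof -
  have "\<exists>f\<in>F. column f = Some c" if "c \<in> odd_columns F" for c
    using that parity_imp_nonempty by (fastforce simp: odd_columns_def)
  then show "odd_columns F \<subseteq> ext_columns"
    using column_of_column assms by (fastforce simp: column_of_def)
  show "odd_columns F \<subseteq> the ` column ` F"
    using \<open>\<And>c. c \<in> odd_columns F \<Longrightarrow> \<exists>f\<in>F. column f = Some c\<close> by (metis image_eqI option.sel subsetI)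
qed

lemma row_parity_odd_columns:
  assumes F: "finite F" "F \<subseteq> mechs Ls N"
    and invisible: "\<forall>f\<in>F. column f = None \<longrightarrow> \<not> parity {q \<in> data_flips f. H i q}"
  shows "parity {c \<in> odd_columns F. ext_col H (resid_set C S) i c} =
    parity {q. q < nq C \<and> H i q \<and> total_flips Ls N F (MData q)}"
proof -
  have column: "column_of f (column f)" if "f \<in> F" for f
    using that F(2) column_of_column by blast
  have "parity {c \<in> odd_columns F. ext_col H (resid_set C S) i c} =
      parity {f\<in>F. case column f of None \<Rightarrow> False | Some c \<Rightarrow> ext_col H (resid_set C S) i c}"
    unfolding odd_columns_def using parity_fibres [OF F(1)] by simp
  also have "{f\<in>F. case column f of None \<Rightarrow> False | Some c \<Rightarrow> ext_col H (resid_set C S) i c} =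
      {f\<in>F. parity {q \<in> {..<nq C}. H i q \<and> mech_effect Ls N f (MData q)}}"
  proof -
    have "(case column f of None \<Rightarrow> False | Some c \<Rightarrow> ext_col H (resid_set C S) i c) =
        parity {q \<in> data_flips f. H i q}" if "f \<in> F" for f
      using column [OF that] invisible that
      by (cases "column f") (auto simp: column_of_def ext_col_column_support)
    moreover have "{q \<in> data_flips f. H i q} = {q \<in> {..<nq C}. H i q \<and> mech_effect Ls N f (MData q)}" for f
      by (auto simp: data_flips_def)
    ultimately show ?thesis
      by auto
  qed
  also have "parity \<dots> = parity {q \<in> {..<nq C}. parity {f\<in>F. H i q \<and> mech_effect Ls N f (MData q)}}"
    using parity_swap [OF F(1), of "{..<nq C}"] by simp
  also have "\<dots> = parity {q. q < nq C \<and> H i q \<and> total_flips Ls N F (MData q)}"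
  proof -
    have "parity {f\<in>F. H i q \<and> mech_effect Ls N f (MData q)} = (H i q \<and> total_flips Ls N F (MData q))" for q
      by (cases "H i q") (simp_all add: total_flips_def parity_def)
    then show ?thesis
      by (simp add: conj_assoc)
  qed
  finally show ?thesis .
qed

lemma card_odd_columns_le:
  assumes "finite F" "F \<subseteq> mechs Ls N"
  shows "finite (odd_columns F)" "card (odd_columns F) \<le> card F"
proof -
  have "odd_columns F \<subseteq> the ` column ` F"
    using odd_columns_subset [OF assms(2)] by blast
  then show "finite (odd_columns F)" "card (odd_columns F) \<le> card F"
    using assms(1) by (auto intro: finite_subset) (meson card_image_le card_mono finite_imageI le_trans)
qed

abbreviation ext_codewords_Z :: "(nat + (chk \<times> nat)) set set" where
  "ext_codewords_Z \<equiv> ext_codewords (nq C) (hx C) (mx C) (lx C) (kx C) (resid_set C S) (resid_idx C S False)"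

abbreviation logical_fault_sets_X :: "mech set set" where
  "logical_fault_sets_X \<equiv> logical_fault_sets Ls N (detectors C BX R) (observables C BX)"

lemma odd_columns_ext_codeword:
  assumes "F \<in> logical_fault_sets_X"
  shows "odd_columns F \<in> ext_codewords_Z"
proof -
  have F: "finite F" "F \<subseteq> mechs Ls N"
    and D: "\<forall>D\<in>detectors C BX R. even (card {m\<in>D. total_flips Ls N F m})"
    and O: "\<exists>Ob\<in>observables C BX. odd (card {m\<in>Ob. total_flips Ls N F m})"
    using assms by (simp_all add: logical_fault_sets_def)
  let ?X = "odd_columns F"
  have invisible_X: "\<forall>f\<in>F. column f = None \<longrightarrow> \<not> parity {q \<in> data_flips f. hx C i q}"
    if "i < mx C" for i
    using that column_of_column F(2) by (force simp: column_of_def)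
  have invisible_L: "\<forall>f\<in>F. column f = None \<longrightarrow> \<not> parity {q \<in> data_flips f. lx C l q}"
    if "l < kx C" for l
    using that column_of_column F(2) by (force simp: column_of_def)
  have "\<forall>i<mx C. even (card {c \<in> ?X. ext_col (hx C) (resid_set C S) i c})"
  proof (intro allI impI)
    fix i
    assume "i < mx C"
    then have "\<not> parity {q. q < nq C \<and> hx C i q \<and> total_flips Ls N F (MData q)}"
      using detectors_X_check_even [OF D _ rounds_pos] by (simp add: supp.simps conj_assoc)
    then show "even (card {c \<in> ?X. ext_col (hx C) (resid_set C S) i c})"
      using row_parity_odd_columns [where H = "hx C", OF F invisible_X] \<open>i < mx C\<close> by (simp add: parity_def)
  qed
  moreover have "\<exists>l<kx C. odd (card {c \<in> ?X. ext_col (lx C) (resid_set C S) l c})"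
  proof -
    obtain l where "l < kx C" "parity {q. q < nq C \<and> lx C l q \<and> total_flips Ls N F (MData q)}"
      using observable_logical_odd [OF O] by blast
    then show ?thesis
      using row_parity_odd_columns [where H = "lx C", OF F invisible_L] by (auto simp: parity_def)
  qed
  ultimately show ?thesis
    using card_odd_columns_le [OF F] odd_columns_subset [OF F(2)]
    by (auto simp: ext_codewords_def ext_columns_def)
qed

end

section \<open>Upper bound: realising an extended codeword by faults\<close>

context x_memory_code
begin

lemma no_MeasX_Z_check: "MeasX u (MAnc r (ZC k)) \<notin> Ls g"
proof
  assume meas: "MeasX u (MAnc r (ZC k)) \<in> Ls g"
  then have g: "g = Suc (r * P + measT S (ZC k))" "r < R" "k < mz C"
    using MAnc_measured_layer [of u r "ZC k" g] by auto
  then have "Ls g = round_layer C S r (measT S (ZC k))"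
    using layer_round check_times [of "ZC k"] by simp
  then show False
    using meas by (simp add: MeasX_in_round_layer)
qed

lemma no_flip_Z_check: "fst F = (\<lambda>_. False) \<Longrightarrow> \<not> propagate Ls g n F (MAnc r (ZC k))"
proof (induction n arbitrary: g F)
  case 0
  then show ?case by simp
next
  case (Suc n)
  have "\<not> layer_flips (Ls g) F (MAnc r (ZC k))"
    unfolding layer_flips_parity using Suc.prems no_MeasX_Z_check by simp
  moreover have "\<not> propagate Ls (Suc g) n (layer_apply (Ls g) F) (MAnc r (ZC k))"
    using Suc.IH layer_apply_no_X [OF Suc.prems] by blast
  ultimately show ?case
    by simp
qed

lemma no_flip_before_last_round:
  assumes "Suc ((R - 1) * P) < g" "r \<noteq> R - 1"
  shows "\<not> propagate Ls g n F (MAnc r c)"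
proof
  assume "propagate Ls g n F (MAnc r c)"
  then obtain g' u where g': "g \<le> g'" "MeasZ u (MAnc r c) \<in> Ls g' \<or> MeasX u (MAnc r c) \<in> Ls g'"
    using propagate_flip_measured_later by blast
  then have g'_eq: "g' = Suc (r * P + measT S c)" and "r < R" "c \<in> checks C"
    using MAnc_measured_layer by blast+
  then have "Suc r * P \<le> (R - 1) * P"
    using assms(2) by (intro mult_right_mono) auto
  moreover have "measT S c < P"
    using check_times \<open>c \<in> checks C\<close> by blast
  ultimately show False
    using g' g'_eq assms(1) by simp
qed

definition x_first :: bool where
  "x_first \<longleftrightarrow>
     (\<forall>i<mx C. \<forall>k<mz C. \<forall>q \<in> supp C (XC i) \<inter> supp C (ZC k). cnT S (XC i) q < cnT S (ZC k) q)"

definition z_first :: bool where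
  "z_first \<longleftrightarrow>
     (\<forall>i<mx C. \<forall>k<mz C. \<forall>q \<in> supp C (XC i) \<inter> supp C (ZC k). cnT S (ZC k) q < cnT S (XC i) q)"

lemma non_interleaved_iff: "non_interleaved C S \<longleftrightarrow> x_first \<or> z_first"
  unfolding non_interleaved_def x_first_def z_first_def ..

lemma per_ge_2: "\<not> x_first \<Longrightarrow> 2 \<le> P"
  using check_times [of "XC _"] by (fastforce simp: x_first_def)

text \<open>A \<open>Z\<close> error on data qubit \<open>q\<close> in the first time step of the last round, before any of
  its CNOTs.\<close>

lemma data_fault_in_mechs:
  assumes "2 \<le> P" "q < nq C"
  shows "(Suc ((R - 1) * P), Idle (Data q), PauliF {} {Data q}) \<in> mechs Ls N"
proof -
  have "Idle (Data q) \<in> round_layer C S (R - 1) 0"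
    using assms(2) cnot_time by (fastforce simp: Idle_in_round_layer)
  moreover have "Ls (Suc ((R - 1) * P)) = round_layer C S (R - 1) 0"
    using layer_round [of "R - 1" 0] rounds_pos assms(1) by simp
  moreover have "Suc ((R - 1) * P) < N"
    using last_round_le [of 0] assms(1) by (simp add: N_eq)
  ultimately show ?thesis
    by (simp add: mechs_def)
qed

lemma data_flips_data_fault:
  assumes "2 \<le> P"
  shows "data_flips (Suc ((R - 1) * P), Idle (Data q), PauliF {} {Data q}) = {q} \<inter> {..<nq C}"
  using data_flips_no_Z_anc last_round_le [of 0] assms by auto

lemma data_fault_MAnc_X:
  assumes i: "i < mx C"
  shows "mech_effect Ls N (Suc ((R - 1) * P), Idle (Data q), PauliF {} {Data q}) (MAnc (R - 1) (XC i)) =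
    (q \<in> supp C (XC i))"
proof -
  have "1 \<le> measT S (XC i)"
    using check_times [of "XC i"] i by simp
  then have "mech_effect Ls N (Suc ((R - 1) * P), Idle (Data q), PauliF {} {Data q}) (MAnc (R - 1) (XC i)) =
      x_anc_flip 1 (\<lambda>u. u \<in> {Data q}) i"
    using propagate_MAnc_X [OF i _, of "R - 1" 1] rounds_pos by simp
  also have "\<dots> = (q \<in> supp C (XC i))"
  proof -
    have "1 \<le> cnT S (XC i) q" if "q \<in> supp C (XC i)"
      using cnot_time [of "XC i" q] i that by simp
    then have "{q' \<in> supp C (XC i). 1 \<le> cnT S (XC i) q' \<and> Data q' \<in> {Data q}} =
        (if q \<in> supp C (XC i) then {q} else {})"
      by auto
    moreover have "pending_pairs 1 (\<lambda>u. u \<in> {Data q}) i = {}"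
      by (simp add: pending_pairs_def)
    ultimately show ?thesis
      by (simp add: x_anc_flip_def parity_def)
  qed
  finally show ?thesis .
qed

abbreviation resid_fault :: "nat \<Rightarrow> nat \<Rightarrow> mech" where
  "resid_fault k q \<equiv>
     (Suc ((R - 1) * P + cnT S (ZC k) q), CNOT (Data q) (Anc (ZC k)), PauliF {} {Data q, Anc (ZC k)})"

lemma resid_fault_in_mechs:
  assumes k: "k < mz C" and q: "q \<in> supp C (ZC k)"
  shows "resid_fault k q \<in> mechs Ls N"
proof -
  have t: "cnT S (ZC k) q < P"
    using cnot_time [of "ZC k" q] check_times [of "ZC k"] k q by simp
  have "CNOT (Data q) (Anc (ZC k)) \<in> round_layer C S (R - 1) (cnT S (ZC k) q)"
    unfolding CNOT_in_round_layer using k q by blast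
  moreover have "Suc ((R - 1) * P + cnT S (ZC k) q) < N"
    using last_round_le [OF t] by (simp add: N_eq)
  ultimately show ?thesis
    using layer_round [OF _ t, of "R - 1"] rounds_pos by (simp add: mechs_def)
qed

lemma data_flips_resid_fault:
  "k < mz C \<Longrightarrow> q \<in> supp C (ZC k) \<Longrightarrow> data_flips (resid_fault k q) = resid_set C S (ZC k, q)"
  using data_flips_CNOT_ZZ [of _ "R - 1" k q] rounds_pos by simp

lemma resid_fault_MAnc_X:
  assumes k: "k < mz C" and q: "q \<in> supp C (ZC k)" and i: "i < mx C"
  shows "mech_effect Ls N (resid_fault k q) (MAnc (R - 1) (XC i)) \<longleftrightarrow>
    Suc (cnT S (ZC k) q) \<le> measT S (XC i) \<and>
    x_anc_flip (Suc (cnT S (ZC k) q)) (\<lambda>u. u \<in> {Data q, Anc (ZC k)}) i"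
proof (cases "Suc (cnT S (ZC k) q) \<le> measT S (XC i)")
  case True
  then show ?thesis
    using propagate_MAnc_X [OF i _ True, of "R - 1"] rounds_pos by simp
next
  case False
  then show ?thesis
    using no_flip_after_measurement [of "R - 1" "XC i" "Suc (Suc ((R - 1) * P + cnT S (ZC k) q))"] by simp
qed

lemma resid_fault_MAnc_X_x_first:
  assumes k: "k < mz C" and q: "q \<in> supp C (ZC k)" and i: "i < mx C" and x_first
  shows "\<not> mech_effect Ls N (resid_fault k q) (MAnc (R - 1) (XC i))"
proof -
  let ?t = "cnT S (ZC k) q"
  have "cnT S (XC i) q < ?t" if "q \<in> supp C (XC i)"
    using \<open>x_first\<close> i k q that unfolding x_first_def by blast
  then have data: "{q' \<in> supp C (XC i). Suc ?t \<le> cnT S (XC i) q' \<and> Data q' \<in> {Data q, Anc (ZC k)}} = {}"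
    by auto
  have pairs: "pending_pairs (Suc ?t) (\<lambda>u. u \<in> {Data q, Anc (ZC k)}) i = {}"
  proof -
    have "cnT S (XC i) q' < cnT S (ZC k') q'" if "k' < mz C" "q' \<in> supp C (XC i)" "q' \<in> supp C (ZC k')" for k' q'
      using \<open>x_first\<close> i that unfolding x_first_def by blast
    then show ?thesis
      by (fastforce simp: pending_pairs_def)
  qed
  show ?thesis
    using resid_fault_MAnc_X [OF k q i] unfolding x_anc_flip_def data pairs by simp
qed

lemma resid_fault_MAnc_X_z_first:
  assumes k: "k < mz C" and q: "q \<in> supp C (ZC k)" and i: "i < mx C" and z_first
  shows "mech_effect Ls N (resid_fault k q) (MAnc (R - 1) (XC i)) =
    parity {q' \<in> resid_set C S (ZC k, q). hx C i q'}"
proof -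
  let ?t = "cnT S (ZC k) q"
  let ?Z = "\<lambda>u. u \<in> {Data q, Anc (ZC k)}"
  have after: "cnT S (ZC k) q' < cnT S (XC i) q'" if "q' \<in> supp C (XC i)" "q' \<in> supp C (ZC k)" for q'
    using \<open>z_first\<close> i k that by (auto simp: z_first_def)
  have other: "?t < cnT S (ZC k) q'" if "q' \<in> supp C (ZC k)" "q' \<noteq> q" "?t \<le> cnT S (ZC k) q'" for q'
    using cnot_times_inj [of "ZC k"] k q that by (metis inj_onD le_neq_implies_less ZC_in_checks)
  have resid: "{q' \<in> resid_set C S (ZC k, q). hx C i q'} = {q' \<in> supp C (XC i). q' \<in> resid_set C S (ZC k, q)}"
    by (auto simp: resid_set_def supp.simps)
  show ?thesis
  proof (cases "Suc ?t \<le> measT S (XC i)")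
    case False
    have empty: "{q' \<in> supp C (XC i). q' \<in> resid_set C S (ZC k, q)} = {}"
      using False after cnot_time [of "XC i"] i by (fastforce simp: resid_set_def)
    show ?thesis
      using resid_fault_MAnc_X [OF k q i] False unfolding resid empty by simp
  next
    case True
    define B where "B = {q' \<in> supp C (XC i). q' \<in> supp C (ZC k) \<and> ?t < cnT S (ZC k) q'}"
    have data: "{q' \<in> supp C (XC i). Suc ?t \<le> cnT S (XC i) q' \<and> ?Z (Data q')} =
        (if q \<in> supp C (XC i) then {q} else {})"
    proof -
      have "?t < cnT S (XC i) q" if "q \<in> supp C (XC i)"
        using after [OF that q] .
      then show ?thesis
        by auto
    qed
    have "pending_pairs (Suc ?t) ?Z i = (\<lambda>q'. (q', k)) ` B"
      using after cnot_time [of "ZC k" q] k q by (auto simp: pending_pairs_def B_def image_iff)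
    then have pairs: "parity (pending_pairs (Suc ?t) ?Z i) = parity B"
      by (simp add: parity_image inj_on_def)
    have "{q' \<in> supp C (XC i). q' \<in> resid_set C S (ZC k, q)} = (if q \<in> supp C (XC i) then {q} else {}) \<union> B"
      using q other by (auto simp: resid_set_def B_def)
    moreover have "(if q \<in> supp C (XC i) then {q} else {}) \<inter> B = {}" "finite B"
      by (auto simp: B_def)
    ultimately have "parity {q' \<in> supp C (XC i). q' \<in> resid_set C S (ZC k, q)} =
        (parity (if q \<in> supp C (XC i) then {q} else {}) \<noteq> parity B)"
      by (simp add: parity_Un)
    then show ?thesis
      using resid_fault_MAnc_X [OF k q i] True resid data pairs by (simp add: x_anc_flip_def)
  qed
qed

text \<open>A data column is realised by a flip of the final measurement if the \<open>X\<close> checks come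
  first; otherwise the last round of \<open>X\<close> checks sees the residual errors, and the data column
  must be realised by a \<open>Z\<close> error that they see as well.\<close>

fun column_fault :: "nat + (chk \<times> nat) \<Rightarrow> mech" where
  "column_fault (Inl q) =
     (if x_first then (Suc (R * P), MeasX (Data q) (MData q), FlipF)
      else (Suc ((R - 1) * P), Idle (Data q), PauliF {} {Data q}))"
| "column_fault (Inr (c, q)) =
     (Suc ((R - 1) * P + cnT S c q), CNOT (Data q) (Anc c), PauliF {} {Data q, Anc c})"

lemma ext_columns_cases:
  assumes "c \<in> ext_columns"
  obtains q where "c = Inl q" "q < nq C"
    | k q where "c = Inr (ZC k, q)" "k < mz C" "q \<in> supp C (ZC k)"
  using assms that
  by (auto simp: ext_columns_def resid_idx_def) (metis ZC_in_checks isX.simps(1) chk.exhaust)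

lemma column_fault_location_inj:
  "(\<lambda>(g, p, e). (g, p)) (column_fault c) = (\<lambda>(g, p, e). (g, p)) (column_fault c') \<Longrightarrow> c = c'"
  by (cases c; cases c') (auto split: if_splits)

lemma column_fault_in_mechs:
  assumes "c \<in> ext_columns"
  shows "column_fault c \<in> mechs Ls N"
  using assms
proof (cases rule: ext_columns_cases)
  case (1 q)
  show ?thesis
  proof (cases x_first)
    case True
    then show ?thesis
      using 1 by (auto simp: mechs_def layer_final N_eq)
  next
    case False
    then show ?thesis
      using data_fault_in_mechs [OF per_ge_2 \<open>q < nq C\<close>] 1 by simp
  qed
next
  case (2 k q)
  then show ?thesis
    using resid_fault_in_mechs by simp
qed

lemma data_flips_column_fault:
  assumes "c \<in> ext_columns"
  shows "data_flips (column_fault c) = column_support c"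
  using assms
proof (cases rule: ext_columns_cases)
  case (1 q)
  then show ?thesis
    using data_flips_data_fault [OF per_ge_2] by (auto simp: data_flips_def)
next
  case (2 k q)
  then show ?thesis
    using data_flips_resid_fault by simp
qed

lemma column_fault_MAnc_Z: "\<not> mech_effect Ls N (column_fault c) (MAnc r (ZC k))"
proof -
  have "\<not> propagate Ls g n (\<lambda>_. False, Z) (MAnc r (ZC k))" for g n Z
    by (simp add: no_flip_Z_check)
  then show ?thesis
    by (cases c) auto
qed

lemma column_fault_MAnc_early:
  assumes "r \<noteq> R - 1"
  shows "\<not> mech_effect Ls N (column_fault c) (MAnc r c')"
proof -
  have later: "\<not> propagate Ls (Suc (Suc ((R - 1) * P + t))) n F (MAnc r c')" for t n F
    using assms by (intro no_flip_before_last_round) auto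
  then show ?thesis
    using later [of 0] by (cases c) (auto simp del: add_Suc_right)
qed

lemma column_fault_MAnc_X:
  assumes c: "c \<in> ext_columns" and i: "i < mx C" and NI: "x_first \<or> z_first"
  shows "mech_effect Ls N (column_fault c) (MAnc (R - 1) (XC i)) =
    (\<not> x_first \<and> ext_col (hx C) (resid_set C S) i c)"
  using c
proof (cases rule: ext_columns_cases)
  case (1 q)
  then show ?thesis
    using data_fault_MAnc_X [OF i] by (auto simp: supp.simps)
next
  case (2 k q)
  then show ?thesis
    using resid_fault_MAnc_X_x_first [OF 2(2,3) i] resid_fault_MAnc_X_z_first [OF 2(2,3) i] NI
    by (auto simp: parity_def)
qed

lemma total_flips_column_faults:
  "total_flips Ls N (column_fault ` X) m = parity {c\<in>X. mech_effect Ls N (column_fault c) m}"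
proof -
  have "inj_on column_fault A" for A
    by (rule inj_onI) (metis column_fault_location_inj)
  moreover have "{f \<in> column_fault ` X. mech_effect Ls N f m} =
      column_fault ` {c\<in>X. mech_effect Ls N (column_fault c) m}"
    by auto
  ultimately show ?thesis
    by (simp add: total_flips_def parity_def card_image)
qed

lemma column_faults_row_parity:
  assumes X: "finite X" "X \<subseteq> ext_columns"
  shows "parity {q. q < nq C \<and> H i q \<and> total_flips Ls N (column_fault ` X) (MData q)} =
    parity {c\<in>X. ext_col H (resid_set C S) i c}"
proof -
  have flips: "mech_effect Ls N (column_fault c) (MData q) \<longleftrightarrow> q \<in> column_support c"
    if "c \<in> X" "q < nq C" for c q
    using data_flips_column_fault [of c] that X(2) by (auto simp: data_flips_def)
  have total: "total_flips Ls N (column_fault ` X) (MData q) = parity {c\<in>X. q \<in> column_support c}"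
    if "q < nq C" for q
  proof -
    have "{c\<in>X. mech_effect Ls N (column_fault c) (MData q)} = {c\<in>X. q \<in> column_support c}"
      using flips that by blast
    then show ?thesis
      by (simp add: total_flips_column_faults)
  qed
  have "{q. q < nq C \<and> H i q \<and> total_flips Ls N (column_fault ` X) (MData q)} =
      {q \<in> {..<nq C}. parity {c\<in>X. H i q \<and> q \<in> column_support c}}"
  proof (rule set_eqI)
    fix q
    show "q \<in> {q. q < nq C \<and> H i q \<and> total_flips Ls N (column_fault ` X) (MData q)} \<longleftrightarrow>
        q \<in> {q \<in> {..<nq C}. parity {c\<in>X. H i q \<and> q \<in> column_support c}}"
      using total [of q] by (cases "H i q") auto
  qed
  then have "parity {q. q < nq C \<and> H i q \<and> total_flips Ls N (column_fault ` X) (MData q)} =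
      parity {q \<in> {..<nq C}. parity {c\<in>X. H i q \<and> q \<in> column_support c}}"
    by simp
  also have "\<dots> = parity {c\<in>X. parity {q \<in> {..<nq C}. H i q \<and> q \<in> column_support c}}"
    by (rule parity_swap [OF finite_lessThan X(1)])
  also have "\<dots> = parity {c\<in>X. ext_col H (resid_set C S) i c}"
  proof -
    have "{q \<in> {..<nq C}. H i q \<and> q \<in> column_support c} = {q \<in> column_support c. H i q}" if "c \<in> X" for c
      using column_support_less [of c] that X(2) by auto
    then show ?thesis
      by (auto simp: ext_col_column_support intro!: arg_cong [where f = parity])
  qed
  finally show ?thesis .
qed

lemma column_faults_no_MAnc_flip:
  assumes X: "X \<subseteq> ext_columns" and NI: "x_first \<or> z_first"
    and H: "\<forall>i<mx C. even (card {c\<in>X. ext_col (hx C) (resid_set C S) i c})"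
    and c: "c \<in> checks C"
  shows "\<not> total_flips Ls N (column_fault ` X) (MAnc r c)"
proof -
  have "\<not> parity {c'\<in>X. mech_effect Ls N (column_fault c') (MAnc r c)}"
  proof (cases c)
    case (XC i)
    then have "i < mx C"
      using c by simp
    then have "mech_effect Ls N (column_fault c') (MAnc r c) \<longleftrightarrow>
        r = R - 1 \<and> \<not> x_first \<and> ext_col (hx C) (resid_set C S) i c'" if "c' \<in> X" for c'
      using column_fault_MAnc_X [OF _ _ NI, of c' i] column_fault_MAnc_early [of r c' c] that X XC
      by (cases "r = R - 1") auto
    then have "{c'\<in>X. mech_effect Ls N (column_fault c') (MAnc r c)} =
        (if r = R - 1 \<and> \<not> x_first then {c'\<in>X. ext_col (hx C) (resid_set C S) i c'} else {})"
      by auto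
    then show ?thesis
      using H \<open>i < mx C\<close> by (simp add: parity_def)
  qed (simp add: column_fault_MAnc_Z)
  then show ?thesis
    by (simp add: total_flips_column_faults)
qed

lemma column_faults_detectors:
  assumes X: "finite X" "X \<subseteq> ext_columns" and NI: "x_first \<or> z_first"
    and H: "\<forall>i<mx C. even (card {c\<in>X. ext_col (hx C) (resid_set C S) i c})"
    and D: "D \<in> detectors C BX R"
  shows "even (card {m\<in>D. total_flips Ls N (column_fault ` X) m})"
proof -
  let ?F = "column_fault ` X"
  have no_MAnc: "\<not> total_flips Ls N ?F (MAnc r c)" if "c \<in> checks C" for r c
    using column_faults_no_MAnc_flip [OF X(2) NI H that] .
  from D consider (anc) "\<forall>m\<in>D. \<exists>r c. m = MAnc r c \<and> c \<in> checks C"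
    | (last) i where "i < mx C" "D = insert (MAnc (R - 1) (XC i)) (MData ` supp C (XC i))"
    unfolding detectors_def by auto
  then show ?thesis
  proof cases
    case anc
    then have empty: "{m\<in>D. total_flips Ls N ?F m} = {}"
      using no_MAnc by fastforce
    show ?thesis
      unfolding empty by simp
  next
    case last
    then have "{m\<in>D. total_flips Ls N ?F m} =
        MData ` {q. q < nq C \<and> hx C i q \<and> total_flips Ls N ?F (MData q)}"
      using no_MAnc [of "XC i" "R - 1"] by (auto simp: supp.simps)
    moreover have "\<not> parity {q. q < nq C \<and> hx C i q \<and> total_flips Ls N ?F (MData q)}"
      using column_faults_row_parity [OF X] H last(1) by (simp add: parity_def)
    ultimately show ?thesis
      by (simp add: parity_def card_image inj_on_def)
  qed
qed

lemma column_faults_observable: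
  assumes X: "finite X" "X \<subseteq> ext_columns"
    and L: "l < kx C" "odd (card {c\<in>X. ext_col (lx C) (resid_set C S) l c})"
  shows "\<exists>Ob\<in>observables C BX. odd (card {m\<in>Ob. total_flips Ls N (column_fault ` X) m})"
proof
  let ?Ob = "MData ` {q. q < nq C \<and> lx C l q}"
  have "{m \<in> ?Ob. total_flips Ls N (column_fault ` X) m} =
      MData ` {q. q < nq C \<and> lx C l q \<and> total_flips Ls N (column_fault ` X) (MData q)}"
    by auto
  then show "odd (card {m \<in> ?Ob. total_flips Ls N (column_fault ` X) m})"
    using column_faults_row_parity [OF X, of "lx C" l] L(2) by (simp add: parity_def card_image inj_on_def)
  show "?Ob \<in> observables C BX"
    using L(1) by auto
qed

lemma column_faults_locations_distinct: "inj_on (\<lambda>(g, p, e). (g, p)) (column_fault ` X)"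
proof (rule inj_onI)
  fix f f'
  assume "f \<in> column_fault ` X" "f' \<in> column_fault ` X"
    and location: "(\<lambda>(g, p, e). (g, p)) f = (\<lambda>(g, p, e). (g, p)) f'"
  then obtain c c' where "f = column_fault c" "f' = column_fault c'"
    by blast
  with location show "f = f'"
    using column_fault_location_inj [of c c'] by simp
qed

lemma column_faults_logical:
  assumes X: "X \<in> ext_codewords_Z" and NI: "x_first \<or> z_first"
  shows "column_fault ` X \<in> logical_fault_sets_X"
proof -
  have X': "finite X" "X \<subseteq> ext_columns"
    and H: "\<forall>i<mx C. even (card {c\<in>X. ext_col (hx C) (resid_set C S) i c})"
    and L: "\<exists>l<kx C. odd (card {c\<in>X. ext_col (lx C) (resid_set C S) l c})"
    using X by (simp_all add: ext_codewords_def ext_columns_def)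
  show ?thesis
    using X' column_fault_in_mechs column_faults_detectors [OF X' NI H] column_faults_observable [OF X'] L
      column_faults_locations_distinct
    by (auto simp: logical_fault_sets_def)
qed

lemma circ_dist_BX_eq:
  assumes "non_interleaved C S"
  shows "circ_dist_basis C S R BX = ext_dist_Z C S (resid_idx C S False)"
  unfolding circ_dist_basis_def circuit_distance_logical_fault_sets ext_dist_Z_def ext_dist_ext_codewords
proof (rule antisym)
  show "Inf ((\<lambda>F. enat (card F)) ` logical_fault_sets_X) \<le> Inf ((\<lambda>X. enat (card X)) ` ext_codewords_Z)"
  proof (rule Inf_greatest)
    fix y
    assume "y \<in> (\<lambda>X. enat (card X)) ` ext_codewords_Z"
    then obtain X where X: "X \<in> ext_codewords_Z" "y = enat (card X)"
      by blast
    then have "Inf ((\<lambda>F. enat (card F)) ` logical_fault_sets_X) \<le> enat (card (column_fault ` X))"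
      using column_faults_logical assms non_interleaved_iff by (intro Inf_lower) auto
    also have "\<dots> \<le> y"
      using X by (simp add: card_image_le ext_codewords_def)
    finally show "Inf ((\<lambda>F. enat (card F)) ` logical_fault_sets_X) \<le> y" .
  qed
  show "Inf ((\<lambda>X. enat (card X)) ` ext_codewords_Z) \<le> Inf ((\<lambda>F. enat (card F)) ` logical_fault_sets_X)"
  proof (rule Inf_greatest)
    fix y
    assume "y \<in> (\<lambda>F. enat (card F)) ` logical_fault_sets_X"
    then obtain F where F: "F \<in> logical_fault_sets_X" "y = enat (card F)"
      by blast
    then have "Inf ((\<lambda>X. enat (card X)) ` ext_codewords_Z) \<le> enat (card (odd_columns F))"
      using odd_columns_ext_codeword by (intro Inf_lower) auto
    also have "\<dots> \<le> y"
      using F card_odd_columns_le [of F] by (simp add: logical_fault_sets_def)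
    finally show "Inf ((\<lambda>X. enat (card X)) ` ext_codewords_Z) \<le> y" .
  qed
qed

end

section \<open>Exchanging the roles of \<open>X\<close> and \<open>Z\<close>\<close>

text \<open>Conjugating a circuit by Hadamards on all qubits exchanges \<open>X\<close>- and \<open>Z\<close>-type preparations,
  measurements and frames and reverses every CNOT; relabelling the checks accordingly turns
  the \<open>Z\<close>-basis memory experiment of a code into the \<open>X\<close>-basis one of the dual code.\<close>

fun swap_chk :: "chk \<Rightarrow> chk" where
  "swap_chk (XC i) = ZC i"
| "swap_chk (ZC k) = XC k"

fun swap_qubit :: "qubit \<Rightarrow> qubit" where
  "swap_qubit (Data q) = Data q"
| "swap_qubit (Anc c) = Anc (swap_chk c)"

fun swap_meas :: "meas \<Rightarrow> meas" where
  "swap_meas (MAnc r c) = MAnc r (swap_chk c)"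
| "swap_meas (MData q) = MData q"

fun swap_op :: "op \<Rightarrow> op" where
  "swap_op (PrepZ u) = PrepX (swap_qubit u)"
| "swap_op (PrepX u) = PrepZ (swap_qubit u)"
| "swap_op (MeasZ u m) = MeasX (swap_qubit u) (swap_meas m)"
| "swap_op (MeasX u m) = MeasZ (swap_qubit u) (swap_meas m)"
| "swap_op (CNOT a b) = CNOT (swap_qubit b) (swap_qubit a)"
| "swap_op (Idle u) = Idle (swap_qubit u)"

fun swap_fault :: "fkind \<Rightarrow> fkind" where
  "swap_fault (PauliF X Z) = PauliF (swap_qubit ` Z) (swap_qubit ` X)"
| "swap_fault FlipF = FlipF"

fun swap_mech :: "mech \<Rightarrow> mech" where
  "swap_mech (g, p, e) = (g, swap_op p, swap_fault e)"

definition swap_frame :: "frame \<Rightarrow> frame" where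
  "swap_frame F = (snd F \<circ> swap_qubit, fst F \<circ> swap_qubit)"

lemma swap_chk_swap_chk [simp]: "swap_chk (swap_chk c) = c"
  by (cases c) auto

lemma swap_qubit_swap_qubit [simp]: "swap_qubit (swap_qubit u) = u"
  by (cases u) auto

lemma swap_meas_swap_meas [simp]: "swap_meas (swap_meas m) = m"
  by (cases m) auto

lemma swap_op_swap_op [simp]: "swap_op (swap_op p) = p"
  by (cases p) auto

lemma swap_qubit_image_image [simp]: "swap_qubit ` swap_qubit ` Z = Z"
  by (force simp: image_image)

lemma swap_fault_swap_fault [simp]: "swap_fault (swap_fault e) = e"
  by (cases e) auto

lemma swap_mech_swap_mech [simp]: "swap_mech (swap_mech f) = f"
  by (cases f) auto

lemma inj_swap_qubit: "inj_on swap_qubit A"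
  by (metis inj_onI swap_qubit_swap_qubit)

lemma inj_swap_meas: "inj_on swap_meas A"
  by (metis inj_onI swap_meas_swap_meas)

lemma inj_swap_mech: "inj_on swap_mech A"
  by (metis inj_onI swap_mech_swap_mech)

lemma swap_chk_eq_iff: "swap_chk a = b \<longleftrightarrow> a = swap_chk b"
  by (metis swap_chk_swap_chk)

lemma swap_qubit_eq_iff: "swap_qubit a = b \<longleftrightarrow> a = swap_qubit b"
  by (metis swap_qubit_swap_qubit)

lemma swap_fault_eq_iff: "swap_fault a = b \<longleftrightarrow> a = swap_fault b"
  by (metis swap_fault_swap_fault)

lemma swap_chk_inject [simp]: "swap_chk a = swap_chk b \<longleftrightarrow> a = b"
  by (metis swap_chk_swap_chk)

lemma swap_qubit_inject [simp]: "swap_qubit a = swap_qubit b \<longleftrightarrow> a = b"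
  by (metis swap_qubit_swap_qubit)

lemma swap_meas_inject [simp]: "swap_meas a = swap_meas b \<longleftrightarrow> a = b"
  by (metis swap_meas_swap_meas)

lemma swap_meas_eq_MAnc [simp]: "swap_meas m = MAnc r c \<longleftrightarrow> m = MAnc r (swap_chk c)"
  by (cases m) (auto simp: swap_chk_eq_iff)

lemma swap_meas_eq_MData [simp]: "swap_meas m = MData q \<longleftrightarrow> m = MData q"
  by (cases m) auto

lemma isX_swap_chk [simp]: "isX (swap_chk c) \<longleftrightarrow> \<not> isX c"
  by (cases c) auto

lemma swap_op_image_iff: "p \<in> swap_op ` L \<longleftrightarrow> swap_op p \<in> L"
  by (metis image_iff swap_op_swap_op)

lemma swap_qubit_image_iff: "u \<in> swap_qubit ` A \<longleftrightarrow> swap_qubit u \<in> A"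
  by (metis image_iff swap_qubit_swap_qubit)

lemma swap_qubit_image_eq_singleton [simp]: "swap_qubit ` X = {swap_qubit u} \<longleftrightarrow> X = {u}"
  by (metis image_empty image_insert swap_qubit_image_image)

lemma swap_qubit_image_subset_iff: "swap_qubit ` Z \<subseteq> swap_qubit ` A \<longleftrightarrow> Z \<subseteq> A"
  by (metis image_mono swap_qubit_image_image)

lemma reset_swap_op: "reset (swap_op ` L) u = reset L (swap_qubit u)"
  unfolding reset_def swap_op_image_iff by (auto simp: swap_qubit_eq_iff)

lemma CNOT_controls_swap_op:
  "{a. CNOT a u \<in> swap_op ` L \<and> fst (swap_frame F) a} = swap_qubit ` {b. CNOT (swap_qubit u) b \<in> L \<and> snd F b}"
  by (auto simp: swap_op_image_iff swap_frame_def swap_qubit_image_iff swap_qubit_eq_iff)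

lemma CNOT_targets_swap_op:
  "{b. CNOT u b \<in> swap_op ` L \<and> snd (swap_frame F) b} = swap_qubit ` {a. CNOT a (swap_qubit u) \<in> L \<and> fst F a}"
  by (auto simp: swap_op_image_iff swap_frame_def swap_qubit_image_iff swap_qubit_eq_iff)

lemma layer_apply_swap_op: "layer_apply (swap_op ` L) (swap_frame F) = swap_frame (layer_apply L F)"
proof (rule prod_eqI; rule ext)
  fix u
  show "fst (layer_apply (swap_op ` L) (swap_frame F)) u = fst (swap_frame (layer_apply L F)) u"
    unfolding fst_layer_apply CNOT_controls_swap_op parity_image [OF inj_swap_qubit] reset_swap_op
    by (simp add: swap_frame_def snd_layer_apply)
  show "snd (layer_apply (swap_op ` L) (swap_frame F)) u = snd (swap_frame (layer_apply L F)) u"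
    unfolding snd_layer_apply CNOT_targets_swap_op parity_image [OF inj_swap_qubit] reset_swap_op
    by (simp add: swap_frame_def fst_layer_apply)
qed

lemma layer_flips_swap_op: "layer_flips (swap_op ` L) (swap_frame F) (swap_meas m) = layer_flips L F m"
proof -
  have "{u. MeasZ u (swap_meas m) \<in> swap_op ` L \<and> fst (swap_frame F) u} =
      swap_qubit ` {v. MeasX v m \<in> L \<and> snd F v}"
    "{u. MeasX u (swap_meas m) \<in> swap_op ` L \<and> snd (swap_frame F) u} =
      swap_qubit ` {v. MeasZ v m \<in> L \<and> fst F v}"
    by (auto simp: swap_op_image_iff swap_frame_def swap_qubit_image_iff)
  then show ?thesis
    by (simp add: layer_flips_parity parity_image [OF inj_swap_qubit]) auto
qed

lemma propagate_swap_op: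
  "propagate (\<lambda>g. swap_op ` Ls g) g n (swap_frame F) (swap_meas m) = propagate Ls g n F m"
proof (induction n arbitrary: g F)
  case 0
  then show ?case by simp
next
  case (Suc n)
  show ?case
    using Suc.IH layer_flips_swap_op layer_apply_swap_op by simp
qed

lemma fault_ok_swap_op: "fault_ok (swap_op p) (swap_fault e) = fault_ok p e"
proof (cases p)
  case (PrepZ u)
  then show ?thesis by (cases e) (auto simp: swap_fault_eq_iff)
next
  case (PrepX u)
  then show ?thesis by (cases e) (auto simp: swap_fault_eq_iff)
next
  case (MeasZ u m)
  then show ?thesis by (cases e) auto
next
  case (MeasX u m)
  then show ?thesis by (cases e) auto
next
  case (CNOT a b)
  have "swap_qubit ` Z \<subseteq> {swap_qubit b, swap_qubit a} \<longleftrightarrow> Z \<subseteq> {a, b}" for Z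
    using swap_qubit_image_subset_iff [of Z "{a, b}"] by (simp add: insert_commute)
  then show ?thesis
    using CNOT by (cases e) auto
next
  case (Idle u)
  have "swap_qubit ` Z \<subseteq> {swap_qubit u} \<longleftrightarrow> Z \<subseteq> {u}" for Z
    using swap_qubit_image_subset_iff [of Z "{u}"] by simp
  then show ?thesis
    using Idle by (cases e) auto
qed

lemma mech_effect_swap_mech:
  "mech_effect (\<lambda>g. swap_op ` Ls g) N (swap_mech f) (swap_meas m) = mech_effect Ls N f m"
proof -
  obtain g p e where f: "f = (g, p, e)"
    by (cases f)
  show ?thesis
  proof (cases e)
    case (PauliF X Z)
    have "((\<lambda>u. u \<in> swap_qubit ` Z), (\<lambda>u. u \<in> swap_qubit ` X)) = swap_frame ((\<lambda>u. u \<in> X), (\<lambda>u. u \<in> Z))"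
      by (auto simp: swap_frame_def swap_qubit_image_iff)
    then show ?thesis
      using propagate_swap_op by (simp add: f PauliF)
  next
    case FlipF
    have "meas_label (swap_op p) = map_option swap_meas (meas_label p)"
      by (cases p) auto
    then show ?thesis
      by (cases "meas_label p") (auto simp: f FlipF)
  qed
qed

lemma swap_mech_in_mechs_iff: "swap_mech f \<in> mechs (\<lambda>g. swap_op ` Ls g) N \<longleftrightarrow> f \<in> mechs Ls N"
  by (cases f) (auto simp: mechs_def swap_op_image_iff fault_ok_swap_op)

lemma swap_logical_fault_set:
  assumes "F \<in> logical_fault_sets Ls N Ds Obs"
  shows "swap_mech ` F \<in>
    logical_fault_sets (\<lambda>g. swap_op ` Ls g) N ((\<lambda>D. swap_meas ` D) ` Ds) ((\<lambda>B. swap_meas ` B) ` Obs)"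
proof -
  let ?Ls' = "\<lambda>g. swap_op ` Ls g"
  have F: "finite F" "F \<subseteq> mechs Ls N" "inj_on (\<lambda>(g, p, e). (g, p)) F"
    "\<forall>D \<in> Ds. even (card {m \<in> D. total_flips Ls N F m})"
    "\<exists>Ob \<in> Obs. odd (card {m \<in> Ob. total_flips Ls N F m})"
    using assms by (simp_all add: logical_fault_sets_def)
  have total: "total_flips ?Ls' N (swap_mech ` F) (swap_meas m) = total_flips Ls N F m" for m
  proof -
    have "{f \<in> swap_mech ` F. mech_effect ?Ls' N f (swap_meas m)} = swap_mech ` {f \<in> F. mech_effect Ls N f m}"
      using mech_effect_swap_mech by auto
    then show ?thesis
      unfolding total_flips_def by (simp add: card_image [OF inj_swap_mech])
  qed
  have count: "card {m \<in> swap_meas ` A. total_flips ?Ls' N (swap_mech ` F) m} = card {m \<in> A. total_flips Ls N F m}"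
    for A
  proof -
    have "{m \<in> swap_meas ` A. total_flips ?Ls' N (swap_mech ` F) m} = swap_meas ` {m \<in> A. total_flips Ls N F m}"
      using total by auto
    then show ?thesis
      by (simp add: card_image [OF inj_swap_meas])
  qed
  have "swap_mech ` F \<subseteq> mechs ?Ls' N"
    using F(2) swap_mech_in_mechs_iff by blast
  moreover have "inj_on (\<lambda>(g, p, e). (g, p)) (swap_mech ` F)"
  proof (rule inj_onI)
    fix f f'
    assume "f \<in> swap_mech ` F" "f' \<in> swap_mech ` F" and location: "(\<lambda>(g, p, e). (g, p)) f = (\<lambda>(g, p, e). (g, p)) f'"
    then obtain h h' where h: "h \<in> F" "h' \<in> F" "f = swap_mech h" "f' = swap_mech h'"
      by blast
    obtain g p e g' p' e' where tuples: "h = (g, p, e)" "h' = (g', p', e')"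
      by (cases h, cases h') auto
    then have "g = g'" "swap_op p = swap_op p'"
      using location h(3,4) by simp_all
    then have "(\<lambda>(g, p, e). (g, p)) h = (\<lambda>(g, p, e). (g, p)) h'"
      using tuples by (metis swap_op_swap_op case_prod_conv)
    then have "h = h'"
      using inj_onD [OF F(3) _ h(1,2)] by blast
    then show "f = f'"
      using h(3,4) by simp

  qed
  ultimately show ?thesis
    using F(1,4,5) by (simp add: logical_fault_sets_def count)
qed

lemma circuit_distance_swap:
  "circuit_distance (\<lambda>g. swap_op ` Ls g) N ((\<lambda>D. swap_meas ` D) ` Ds) ((\<lambda>B. swap_meas ` B) ` Obs) =
   circuit_distance Ls N Ds Obs"
proof -
  let ?S = "logical_fault_sets Ls N Ds Obs"
  let ?S' = "logical_fault_sets (\<lambda>g. swap_op ` Ls g) N ((\<lambda>D. swap_meas ` D) ` Ds) ((\<lambda>B. swap_meas ` B) ` Obs)"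
  have involution: "(\<lambda>g. swap_op ` swap_op ` Ls g) = Ls" "(\<lambda>D. swap_meas ` D) ` (\<lambda>D. swap_meas ` D) ` Ds = Ds"
    "(\<lambda>B. swap_meas ` B) ` (\<lambda>B. swap_meas ` B) ` Obs = Obs"
    by (simp_all add: image_image)
  have "?S' = (`) swap_mech ` ?S"
  proof (intro subset_antisym subsetI)
    fix F
    assume "F \<in> ?S'"
    show "F \<in> (`) swap_mech ` ?S"
    proof
      show "F = swap_mech ` swap_mech ` F"
        by (simp add: image_image)
      show "swap_mech ` F \<in> ?S"
        using swap_logical_fault_set [OF \<open>F \<in> ?S'\<close>] unfolding involution .
    qed
  next
    fix F
    assume "F \<in> (`) swap_mech ` ?S"
    then obtain F0 where "F0 \<in> ?S" "F = swap_mech ` F0"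
      by (rule imageE)
    then show "F \<in> ?S'"
      using swap_logical_fault_set by simp
  qed
  then have "(\<lambda>F. enat (card F)) ` ?S' = (\<lambda>F. enat (card F)) ` ?S"
    by (simp add: image_image card_image [OF inj_swap_mech])
  then show ?thesis
    by (simp add: circuit_distance_logical_fault_sets)
qed

definition dual_css :: "css \<Rightarrow> css" where
  "dual_css C =
     C\<lparr>mx := mz C, hx := hz C, mz := mx C, hz := hx C, kx := kz C, lx := lz C, kz := kx C, lz := lx C\<rparr>"

definition dual_sched :: "sched \<Rightarrow> sched" where
  "dual_sched S = S\<lparr>prepT := prepT S \<circ> swap_chk, measT := measT S \<circ> swap_chk, cnT := cnT S \<circ> swap_chk\<rparr>"

lemma dual_css_simps [simp]:
  "nq (dual_css C) = nq C" "mx (dual_css C) = mz C" "mz (dual_css C) = mx C"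
  "hx (dual_css C) = hz C" "hz (dual_css C) = hx C" "kx (dual_css C) = kz C" "kz (dual_css C) = kx C"
  "lx (dual_css C) = lz C" "lz (dual_css C) = lx C"
  by (simp_all add: dual_css_def)

lemma dual_sched_simps [simp]:
  "per (dual_sched S) = per S" "prepT (dual_sched S) c = prepT S (swap_chk c)"
  "measT (dual_sched S) c = measT S (swap_chk c)" "cnT (dual_sched S) c = cnT S (swap_chk c)"
  by (simp_all add: dual_sched_def)

lemma checks_dual: "c \<in> checks (dual_css C) \<longleftrightarrow> swap_chk c \<in> checks C"
  by (cases c) auto

lemma supp_dual: "supp (dual_css C) c = supp C (swap_chk c)"
  by (cases c) (auto simp: supp.simps)

lemma round_layer_dual:
  "p \<in> round_layer (dual_css C) (dual_sched S) r t \<longleftrightarrow> swap_op p \<in> round_layer C S r t"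
proof (cases p)
  case (Idle u)
  have "(\<forall>c\<in>checks (dual_css C). q \<in> supp (dual_css C) c \<longrightarrow> cnT (dual_sched S) c q \<noteq> t) \<longleftrightarrow>
        (\<forall>c\<in>checks C. q \<in> supp C c \<longrightarrow> cnT S c q \<noteq> t)" for q
    by (metis checks_dual dual_sched_simps(4) supp_dual swap_chk_swap_chk)
  moreover have "(\<exists>c. Anc (swap_chk c') = Anc c \<and> P c) \<longleftrightarrow> P (swap_chk c')" for c' P
    by auto
  ultimately show ?thesis
    using Idle by (cases u) (auto simp: Idle_in_round_layer checks_dual supp_dual)
qed (auto simp: CNOT_in_round_layer PrepZ_in_round_layer PrepX_in_round_layer MeasZ_in_round_layer
    MeasX_in_round_layer supp_dual swap_qubit_eq_iff swap_chk_eq_iff)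

lemma mem_layer_dual: "mem_layer (dual_css C) (dual_sched S) BX R g = swap_op ` mem_layer C S BZ R g"
proof -
  have "p \<in> anc_idle (dual_css C) \<longleftrightarrow> swap_op p \<in> anc_idle C" for p
    by (cases p) (auto simp: anc_idle_def checks_dual swap_qubit_eq_iff, metis swap_chk_swap_chk)
  moreover have "p \<in> {PrepX (Data q) | q. q < nq (dual_css C)} \<longleftrightarrow> swap_op p \<in> {PrepZ (Data q) | q. q < nq C}"
    "p \<in> {MeasX (Data q) (MData q) | q. q < nq (dual_css C)} \<longleftrightarrow>
       swap_op p \<in> {MeasZ (Data q) (MData q) | q. q < nq C}" for p
    by (cases p; auto simp: swap_qubit_eq_iff)+
  ultimately have "p \<in> mem_layer (dual_css C) (dual_sched S) BX R g \<longleftrightarrow> swap_op p \<in> mem_layer C S BZ R g" for p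
    unfolding mem_layer_def using round_layer_dual by simp
  then show ?thesis
    using swap_op_image_iff by blast
qed

lemma detectors_dual: "detectors (dual_css C) BX R = (\<lambda>D. swap_meas ` D) ` detectors C BZ R"
proof (intro set_eqI iffI)
  fix D
  assume "D \<in> detectors (dual_css C) BX R"
  then consider (first) i where "i < mz C" "D = {MAnc 0 (XC i)}"
    | (mid) r c where "1 \<le> r" "r < R" "swap_chk c \<in> checks C" "D = {MAnc (r - 1) c, MAnc r c}"
    | (last) i where "i < mz C" "D = insert (MAnc (R - 1) (XC i)) (MData ` supp C (ZC i))"
    unfolding detectors_def by (auto simp: checks_dual supp_dual)
  then show "D \<in> (\<lambda>D. swap_meas ` D) ` detectors C BZ R"
  proof cases
    case first
    then show ?thesis
      by (intro image_eqI [of _ _ "{MAnc 0 (ZC i)}"]) (auto simp: detectors_def)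
  next
    case mid
    then have "{MAnc (r - 1) (swap_chk c), MAnc r (swap_chk c)} \<in> detectors C BZ R"
      unfolding detectors_def by blast
    then show ?thesis
      using mid by (intro image_eqI [of _ _ "{MAnc (r - 1) (swap_chk c), MAnc r (swap_chk c)}"]) auto
  next
    case last
    then have "insert (MAnc (R - 1) (ZC i)) (MData ` supp C (ZC i)) \<in> detectors C BZ R"
      unfolding detectors_def by auto
    then show ?thesis
      using last by (intro image_eqI [of _ _ "insert (MAnc (R - 1) (ZC i)) (MData ` supp C (ZC i))"])
        (auto simp: image_image)
  qed
next
  fix D
  assume "D \<in> (\<lambda>D. swap_meas ` D) ` detectors C BZ R"
  then obtain D0 where D: "D = swap_meas ` D0" "D0 \<in> detectors C BZ R"
    by blast
  from D(2) consider (first) i where "i < mz C" "D0 = {MAnc 0 (ZC i)}"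
    | (mid) r c where "1 \<le> r" "r < R" "c \<in> checks C" "D0 = {MAnc (r - 1) c, MAnc r c}"
    | (last) i where "i < mz C" "D0 = insert (MAnc (R - 1) (ZC i)) (MData ` supp C (ZC i))"
    unfolding detectors_def by auto
  then show "D \<in> detectors (dual_css C) BX R"
  proof cases
    case mid
    then have "swap_chk c \<in> checks (dual_css C)"
      by (simp add: checks_dual)
    then show ?thesis
      using D mid unfolding detectors_def by auto
  next
    case last
    then have "D = insert (MAnc (R - 1) (XC i)) (MData ` supp (dual_css C) (XC i))"
      using D by (auto simp: supp_dual image_image)
    then show ?thesis
      using last unfolding detectors_def by auto
  qed (use D in \<open>auto simp: detectors_def\<close>)
qed

lemma observables_dual: "observables (dual_css C) BX = (\<lambda>B. swap_meas ` B) ` observables C BZ"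
proof -
  have "swap_meas ` B = B" if "B \<in> observables C BZ" for B
  proof -
    obtain l where "B = MData ` {q. q < nq C \<and> lz C l q}"
      using \<open>B \<in> observables C BZ\<close> by auto
    then show ?thesis
      by (auto simp: image_image)
  qed
  then have "(\<lambda>B. swap_meas ` B) ` observables C BZ = (\<lambda>B. B) ` observables C BZ"
    by (rule image_cong [OF refl])
  then show ?thesis
    by simp
qed

lemma circ_dist_basis_BZ_dual: "circ_dist_basis C S R BZ = circ_dist_basis (dual_css C) (dual_sched S) R BX"
  unfolding circ_dist_basis_def mem_layer_dual detectors_dual observables_dual
  by (simp add: circuit_distance_swap mem_len_def)

lemma valid_sec_dual:
  assumes "valid_sec C S"
  shows "valid_sec (dual_css C) (dual_sched S)"
proof -
  have times: "prepT S c < measT S c \<and> measT S c < per S \<and>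
      (\<forall>q \<in> supp C c. prepT S c < cnT S c q \<and> cnT S c q < measT S c) \<and> inj_on (cnT S c) (supp C c)"
    if "c \<in> checks C" for c
    using assms that by (simp add: valid_sec_def)
  have distinct: "cnT S c1 q \<noteq> cnT S c2 q"
    if "c1 \<in> checks C" "c2 \<in> checks C" "c1 \<noteq> c2" "q \<in> supp C c1" "q \<in> supp C c2" for q c1 c2
    using assms that unfolding valid_sec_def by blast
  show ?thesis
    unfolding valid_sec_def supp_dual
    using times distinct by (auto simp: checks_dual)
qed

lemma non_interleaved_dual: "non_interleaved C S \<Longrightarrow> non_interleaved (dual_css C) (dual_sched S)"
  unfolding non_interleaved_def by (auto simp: supp_dual)

lemma css_with_logicals_dual: "css_with_logicals C \<Longrightarrow> css_with_logicals (dual_css C)"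
  unfolding css_with_logicals_def css_code_def by (auto simp: conj_commute)


fun swap_resid :: "chk \<times> nat \<Rightarrow> chk \<times> nat" where
  "swap_resid (c, q) = (swap_chk c, q)"

lemma resid_set_dual: "resid_set (dual_css C) (dual_sched S) \<circ> swap_resid = resid_set C S"
  by (auto simp: resid_set_def supp_dual)

lemma resid_idx_dual: "resid_idx (dual_css C) (dual_sched S) False = swap_resid ` resid_idx C S True"
proof -
  have member: "x \<in> resid_idx (dual_css C) (dual_sched S) False \<longleftrightarrow> swap_resid x \<in> resid_idx C S True" for x
    by (cases x) (auto simp: resid_idx_def checks_dual supp_dual)
  have involution: "swap_resid (swap_resid x) = x" for x
    by (cases x) simp
  show ?thesis
  proof (intro set_eqI iffI)
    fix x
    assume "x \<in> resid_idx (dual_css C) (dual_sched S) False"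
    then show "x \<in> swap_resid ` resid_idx C S True"
      using member involution by (intro image_eqI [of _ _ "swap_resid x"]) auto
  next
    fix x
    assume "x \<in> swap_resid ` resid_idx C S True"
    then show "x \<in> resid_idx (dual_css C) (dual_sched S) False"
      using member involution by auto
  qed
qed

lemma ext_dist_X_dual:
  "ext_dist_Z (dual_css C) (dual_sched S) (resid_idx (dual_css C) (dual_sched S) False) =
   ext_dist_X C S (resid_idx C S True)"
proof -
  have "swap_resid (swap_resid x) = x" for x
    by (cases x) simp
  then show ?thesis
    unfolding ext_dist_Z_def ext_dist_X_def resid_idx_dual
    by (simp add: ext_dist_image_involution resid_set_dual)
qed

theorem corollary1:
  fixes C :: css and S :: sched and R :: nat
  assumes "css_with_logicals C"
    and "valid_sec C S"
    and "non_interleaved C S"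
    and "1 \<le> R"
  shows "(\<forall>RX RZ. RX \<subseteq> resid_idx C S True \<longrightarrow> RZ \<subseteq> resid_idx C S False \<longrightarrow>
            circ_dist C S R \<le> d_ext C S RX RZ) \<and>
         circ_dist C S R = d_ext C S (resid_idx C S True) (resid_idx C S False)"
proof -
  have "x_memory_code C S R" "x_memory_code (dual_css C) (dual_sched S) R"
    using assms valid_sec_dual css_with_logicals_dual
    by (simp_all add: x_memory_code_def x_memory_code_axioms_def x_memory_def)
  then have "circ_dist_basis C S R BX = ext_dist_Z C S (resid_idx C S False)"
    "circ_dist_basis C S R BZ = ext_dist_X C S (resid_idx C S True)"
    using x_memory_code.circ_dist_BX_eq assms(3) non_interleaved_dual [OF assms(3)]
    by (simp_all add: circ_dist_basis_BZ_dual ext_dist_X_dual [symmetric])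
  then have eq: "circ_dist C S R = d_ext C S (resid_idx C S True) (resid_idx C S False)"
    by (simp add: circ_dist_def d_ext_def min.commute)
  moreover have "circ_dist C S R \<le> d_ext C S RX RZ"
    if "RX \<subseteq> resid_idx C S True" "RZ \<subseteq> resid_idx C S False" for RX RZ
    using ext_dist_antimono [OF that(1)] ext_dist_antimono [OF that(2)]
    unfolding eq d_ext_def ext_dist_X_def ext_dist_Z_def by (meson min.mono)
  ultimately show ?thesis
    by blast
qed

end
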